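(* Let the Super Harmonic algorithm (with arbitrary admissible parameters as described in the context) be run on a list $L$ of items with sizes in $(0,1]$, and let $A(L)$ be the number of bins it uses. Let $W^1,\dots,W^{K+1}$ be the weighting functions defined in the context. Then \[ A(L)\le \max_{1\le i\le K+1}\Big\{\sum_{p\in L} W^i(p)\Big\}+O(1), \] where the $O(1)$ term depends only on the parameters of the algorithm and not on $L$.
   Context: One-dimensional online bin packing: items with sizes in $(0,1]$ arrive one by one and must be irrevocably placed into bins of capacity $1$. Super Harmonic algorithm. Parameters: an integer $k\ge1$, reals $t_1=1>t_2>\dots>t_k>t_{k+1}=\epsilon>t_{k+2}=0$, intervals $I_i=(t_{i+1},t_i]$ for $i=1,\dots,k+1$ (an item of size $x$ is of type $i$ if $x\in I_i$), and constants $\alpha_1,\dots,\alpha_k\in[0,1]$. Let $\beta_i=\lfloor 1/t_i\rfloor$ and $\delta_i=1-t_i\beta_i$. Fix reals $0=\Delta_0<\Delta_1<\dots<\Delta_K<1/2$ with $K\le k$ and a map $\phi:\{1,\dots,k\}\to\{0,\dots,K\}$ with $\Delta_{\phi(i)}\le\delta_i$. Let $\varphi(i)=\min\{j: t_i\le\Delta_j,\ 1\le j\le K\}$ (and $\varphi(i)=0$ if $t_i>\Delta_K$). Let $\gamma_i=0$ if $t_i>\Delta_K$, and otherwise $\gamma_i=\max\{1,\lfloor\Delta_1/t_i\rfloor\}$. Bins are named in groups: $(i)$ for $\phi(i)=0$ (only blue type-$i$ items); $(i,?)$ for $\phi(i)\neq0$ (currently only blue type-$i$ items); $(?,j)$ for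 $\alpha_j\ne0$ (currently only red type-$j$ items); $(i,j)$ for $\phi(i)\ne0,\alpha_j\ne0,\gamma_jt_j\le\Delta_{\phi(i)}$ (blue type-$i$ and red type-$j$ items). Counters $s_i,e_i$ start at $0$. For each arriving item $p$ of type $i$: (a) if $i=k+1$, pack $p$ by Next Fit into bins reserved for type $k+1$; (b) otherwise set $s_i\gets s_i+1$; if $e_i<\lfloor\alpha_is_i\rfloor$ then set $e_i\gets e_i+1$ and color $p$ red: if some bin in group $(?,i)$ has fewer than $\gamma_i$ type-$i$ items, put $p$ there; else if for some $j$ a bin in group $(j,i)$ has fewer than $\gamma_i$ type-$i$ items, put $p$ there; else if some bin in group $(j,?)$ has $\Delta_{\phi(j)}\ge\gamma_it_i$, put $p$ there and rename the bin $(j,i)$; otherwise open a new bin $(?,i)$ for $p$. (c) otherwise color $p$ blue: if $\phi(i)=0$, put $p$ into a group-$(i)$ bin with fewer than $\beta_i$ items if one exists, else open a new group-$(i)$ bin. If $\phi(i)\ne0$: if for some $j$ a bin in group $(i,j)$ or $(i,?)$ has fewer than $\beta_i$ type-$i$ items, put $p$ there; else if some bin in group $(?,j)$ has $\Delta_{\phi(i)}\ge\gamma_jt_j$, put $p$ there and rename it $(i,j)$; otherwise open a new bin $(i,?)$ for $p$. Weighting functions. In all formulas below a term $\alpha_i/\gamma_i$ or $\alpha_i/(2\gamma_i)$ is replaced by $0$ when $\gamma_i=0$. For $x\in I_{k+1}$, $W^j(x)=x/(1-\epsilon)$ for every $j$. For $x\in I_i$, $1\le i\le k$: $W^1(x)=\frac{1-\alpha_i}{\beta_i}$.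 For $2\le j\le K$, $W^{K+2-j}(x)$ equals $\frac{1-\alpha_i}{\beta_i}+\frac{\alpha_i}{2\gamma_i}$ if $\phi(i)<j,\varphi(i)<j$; $\frac{1-\alpha_i}{\beta_i}+\frac{\alpha_i}{\gamma_i}$ if $\phi(i)<j,\varphi(i)\ge j$; $\frac{1-\alpha_i}{2\beta_i}+\frac{\alpha_i}{\gamma_i}$ if $\phi(i)\ge j,\varphi(i)\ge j$; $\frac{1-\alpha_i}{2\beta_i}+\frac{\alpha_i}{2\gamma_i}$ if $\phi(i)\ge j,\varphi(i)<j$. $W^{K+1}(x)$ equals $\frac{1-\alpha_i}{\beta_i}$ if $\phi(i)=0,\varphi(i)=0$; $\frac{1-\alpha_i}{\beta_i}+\frac{\alpha_i}{\gamma_i}$ if $\phi(i)=0,\varphi(i)>0$; $0$ if $\phi(i)>0,\varphi(i)=0$; $\frac{\alpha_i}{\gamma_i}$ if $\phi(i)>0,\varphi(i)>0$.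
   Formalization: The admissible parameters also satisfy $\alpha_i=0$ whenever $\gamma_i=0$, for 1 <= i <= k, so only types with $t_i\le\Delta_K$ can have red items. The statement above fails without it. *)

theory Defs
  imports Complex_Main
begin

record shparams =
  sh_k     :: nat
  sh_t     :: "nat \<Rightarrow> real"       \<comment> \<open>t_1, ..., t_{k+2}\<close>
  sh_alpha :: "nat \<Rightarrow> real"       \<comment> \<open>alpha_1, ..., alpha_k\<close>
  sh_K     :: nat
  sh_Delta :: "nat \<Rightarrow> real"       \<comment> \<open>Delta_0, ..., Delta_K\<close>
  sh_phi   :: "nat \<Rightarrow> nat"        \<comment> \<open>phi : {1..k} -> {0..K}\<close>

definition sh_eps :: "shparams \<Rightarrow> real" where
  "sh_eps P = sh_t P (sh_k P + 1)"

definition sh_beta :: "shparams \<Rightarrow> nat \<Rightarrow> nat" where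
  "sh_beta P i = nat \<lfloor>1 / sh_t P i\<rfloor>"

definition sh_delta :: "shparams \<Rightarrow> nat \<Rightarrow> real" where
  "sh_delta P i = 1 - sh_t P i * real (sh_beta P i)"

definition sh_varphi :: "shparams \<Rightarrow> nat \<Rightarrow> nat" where
  "sh_varphi P i =
     (if sh_t P i > sh_Delta P (sh_K P) then 0
      else (LEAST j. 1 \<le> j \<and> j \<le> sh_K P \<and> sh_t P i \<le> sh_Delta P j))"

definition sh_gamma :: "shparams \<Rightarrow> nat \<Rightarrow> nat" where
  "sh_gamma P i =
     (if sh_t P i > sh_Delta P (sh_K P) then 0
      else max 1 (nat \<lfloor>sh_Delta P 1 / sh_t P i\<rfloor>))"

definition sh_admissible :: "shparams \<Rightarrow> bool" where
  "sh_admissible P \<longleftrightarrow>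
     1 \<le> sh_k P \<and>
     sh_t P 1 = 1 \<and>
     (\<forall>i\<in>{1..sh_k P + 1}. sh_t P (i + 1) < sh_t P i) \<and>
     sh_t P (sh_k P + 2) = 0 \<and>
     (\<forall>i\<in>{1..sh_k P}. 0 \<le> sh_alpha P i \<and> sh_alpha P i \<le> 1) \<and>
     sh_K P \<le> sh_k P \<and>
     sh_Delta P 0 = 0 \<and>
     (\<forall>j<sh_K P. sh_Delta P j < sh_Delta P (j + 1)) \<and>
     sh_Delta P (sh_K P) < 1 / 2 \<and>
     (\<forall>i\<in>{1..sh_k P}. sh_phi P i \<le> sh_K P \<and> sh_Delta P (sh_phi P i) \<le> sh_delta P i)"

definition sh_type :: "shparams \<Rightarrow> real \<Rightarrow> nat" where
  "sh_type P x = (THE i. 1 \<le> i \<and> i \<le> sh_k P + 1 \<and> sh_t P (i + 1) < x \<and> x \<le> sh_t P i)"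

text \<open>sh_W P m x is W^m(x), for m in {1..K+1}. For 2 <= j <= K, W^{K+2-j} is
  given by the four-case formula with j = K+2-m.\<close>
definition sh_W :: "shparams \<Rightarrow> nat \<Rightarrow> real \<Rightarrow> real" where
  "sh_W P m x =
    (let i = sh_type P x in
     if i = sh_k P + 1 then x / (1 - sh_eps P)
     else
       (let a = sh_alpha P i; b = real (sh_beta P i); g = sh_gamma P i;
            rf = (if g = 0 then 0 else a / real g);
            rh = (if g = 0 then 0 else a / (2 * real g));
            ph = sh_phi P i; vp = sh_varphi P i; K = sh_K P in
        if m = 1 then (1 - a) / b
        else if m = K + 1 then
          (if ph = 0 \<and> vp = 0 then (1 - a) / b
           else if ph = 0 \<and> vp > 0 then (1 - a) / b + rf
           else if ph > 0 \<and> vp = 0 then 0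
           else rf)
        else
          (let j = K + 2 - m in
           if ph < j \<and> vp < j then (1 - a) / b + rh
           else if ph < j \<and> vp \<ge> j then (1 - a) / b + rf
           else if ph \<ge> j \<and> vp \<ge> j then (1 - a) / (2 * b) + rf
           else (1 - a) / (2 * b) + rh)))"

datatype color = Red | Blue

text \<open>Bin groups: Single i = (i), BlueOnly i = (i,?), RedOnly j = (?,j),
  Mixed i j = (i,j), Small = bins reserved for type k+1 (Next Fit).\<close>
datatype label = Single nat | BlueOnly nat | RedOnly nat | Mixed nat nat | Small

type_synonym bin = "label \<times> (real \<times> color) list"

text \<open>State: list of bins (in order of opening), counters s and e.\<close>
type_synonym state = "bin list \<times> (nat \<Rightarrow> nat) \<times> (nat \<Rightarrow> nat)"

definition sh_init :: state where
  "sh_init = ([], (\<lambda>_. 0), (\<lambda>_. 0))"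

definition cnt :: "shparams \<Rightarrow> color \<Rightarrow> nat \<Rightarrow> bin \<Rightarrow> nat" where
  "cnt P c i b = length (filter (\<lambda>(y, col). col = c \<and> sh_type P y = i) (snd b))"

definition level :: "bin \<Rightarrow> real" where
  "level b = sum_list (map fst (snd b))"

definition put :: "bin list \<Rightarrow> nat \<Rightarrow> label \<Rightarrow> real \<Rightarrow> color \<Rightarrow> bin list" where
  "put bs n lab x c = bs[n := (lab, snd (bs ! n) @ [(x, c)])]"

text \<open>One step of the algorithm (nondeterministic wherever the description says
  "some bin" / "for some j"). The current Next-Fit bin is the most recently opened
  Small bin.\<close>
inductive sh_step :: "shparams \<Rightarrow> state \<Rightarrow> real \<Rightarrow> state \<Rightarrow> bool" for P where
  nf_fit:
    "\<lbrakk> sh_type P x = sh_k P + 1; n < length bs; fst (bs ! n) = Small;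
       \<forall>m. n < m \<and> m < length bs \<longrightarrow> fst (bs ! m) \<noteq> Small;
       level (bs ! n) + x \<le> 1 \<rbrakk>
     \<Longrightarrow> sh_step P (bs, s, e) x (put bs n Small x Blue, s, e)"
| nf_new:
    "\<lbrakk> sh_type P x = sh_k P + 1;
       \<forall>n. n < length bs \<and> fst (bs ! n) = Small \<and>
            (\<forall>m. n < m \<and> m < length bs \<longrightarrow> fst (bs ! m) \<noteq> Small) \<longrightarrow>
            level (bs ! n) + x > 1 \<rbrakk>
     \<Longrightarrow> sh_step P (bs, s, e) x (bs @ [(Small, [(x, Blue)])], s, e)"
| red1:
    "\<lbrakk> sh_type P x = i; i \<le> sh_k P; s' = s(i := s i + 1);
       e i < nat \<lfloor>sh_alpha P i * real (s' i)\<rfloor>;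
       n < length bs; fst (bs ! n) = RedOnly i; cnt P Red i (bs ! n) < sh_gamma P i \<rbrakk>
     \<Longrightarrow> sh_step P (bs, s, e) x (put bs n (RedOnly i) x Red, s', e(i := e i + 1))"
| red2:
    "\<lbrakk> sh_type P x = i; i \<le> sh_k P; s' = s(i := s i + 1);
       e i < nat \<lfloor>sh_alpha P i * real (s' i)\<rfloor>;
       \<not> (\<exists>n'<length bs. fst (bs ! n') = RedOnly i \<and> cnt P Red i (bs ! n') < sh_gamma P i);
       n < length bs; fst (bs ! n) = Mixed j i; cnt P Red i (bs ! n) < sh_gamma P i \<rbrakk>
     \<Longrightarrow> sh_step P (bs, s, e) x (put bs n (Mixed j i) x Red, s', e(i := e i + 1))"
| red3:
    "\<lbrakk> sh_type P x = i; i \<le> sh_k P; s' = s(i := s i + 1);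
       e i < nat \<lfloor>sh_alpha P i * real (s' i)\<rfloor>;
       \<not> (\<exists>n'<length bs. fst (bs ! n') = RedOnly i \<and> cnt P Red i (bs ! n') < sh_gamma P i);
       \<not> (\<exists>n'<length bs. \<exists>j'. fst (bs ! n') = Mixed j' i \<and> cnt P Red i (bs ! n') < sh_gamma P i);
       n < length bs; fst (bs ! n) = BlueOnly j;
       sh_Delta P (sh_phi P j) \<ge> real (sh_gamma P i) * sh_t P i \<rbrakk>
     \<Longrightarrow> sh_step P (bs, s, e) x (put bs n (Mixed j i) x Red, s', e(i := e i + 1))"
| red4:
    "\<lbrakk> sh_type P x = i; i \<le> sh_k P; s' = s(i := s i + 1);
       e i < nat \<lfloor>sh_alpha P i * real (s' i)\<rfloor>;
       \<not> (\<exists>n'<length bs. fst (bs ! n') = RedOnly i \<and> cnt P Red i (bs ! n') < sh_gamma P i);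
       \<not> (\<exists>n'<length bs. \<exists>j'. fst (bs ! n') = Mixed j' i \<and> cnt P Red i (bs ! n') < sh_gamma P i);
       \<not> (\<exists>n'<length bs. \<exists>j'. fst (bs ! n') = BlueOnly j' \<and>
              sh_Delta P (sh_phi P j') \<ge> real (sh_gamma P i) * sh_t P i) \<rbrakk>
     \<Longrightarrow> sh_step P (bs, s, e) x (bs @ [(RedOnly i, [(x, Red)])], s', e(i := e i + 1))"
| blue1:
    "\<lbrakk> sh_type P x = i; i \<le> sh_k P; s' = s(i := s i + 1);
       \<not> e i < nat \<lfloor>sh_alpha P i * real (s' i)\<rfloor>; sh_phi P i = 0;
       n < length bs; fst (bs ! n) = Single i; cnt P Blue i (bs ! n) < sh_beta P i \<rbrakk>
     \<Longrightarrow> sh_step P (bs, s, e) x (put bs n (Single i) x Blue, s', e)"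
| blue2:
    "\<lbrakk> sh_type P x = i; i \<le> sh_k P; s' = s(i := s i + 1);
       \<not> e i < nat \<lfloor>sh_alpha P i * real (s' i)\<rfloor>; sh_phi P i = 0;
       \<not> (\<exists>n'<length bs. fst (bs ! n') = Single i \<and> cnt P Blue i (bs ! n') < sh_beta P i) \<rbrakk>
     \<Longrightarrow> sh_step P (bs, s, e) x (bs @ [(Single i, [(x, Blue)])], s', e)"
| blue3:
    "\<lbrakk> sh_type P x = i; i \<le> sh_k P; s' = s(i := s i + 1);
       \<not> e i < nat \<lfloor>sh_alpha P i * real (s' i)\<rfloor>; sh_phi P i \<noteq> 0;
       n < length bs; fst (bs ! n) = BlueOnly i \<or> (\<exists>j. fst (bs ! n) = Mixed i j);
       cnt P Blue i (bs ! n) < sh_beta P i \<rbrakk>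
     \<Longrightarrow> sh_step P (bs, s, e) x (put bs n (fst (bs ! n)) x Blue, s', e)"
| blue4:
    "\<lbrakk> sh_type P x = i; i \<le> sh_k P; s' = s(i := s i + 1);
       \<not> e i < nat \<lfloor>sh_alpha P i * real (s' i)\<rfloor>; sh_phi P i \<noteq> 0;
       \<not> (\<exists>n'<length bs. (fst (bs ! n') = BlueOnly i \<or> (\<exists>j'. fst (bs ! n') = Mixed i j')) \<and>
              cnt P Blue i (bs ! n') < sh_beta P i);
       n < length bs; fst (bs ! n) = RedOnly j;
       sh_Delta P (sh_phi P i) \<ge> real (sh_gamma P j) * sh_t P j \<rbrakk>
     \<Longrightarrow> sh_step P (bs, s, e) x (put bs n (Mixed i j) x Blue, s', e)"
| blue5:
    "\<lbrakk> sh_type P x = i; i \<le> sh_k P; s' = s(i := s i + 1);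
       \<not> e i < nat \<lfloor>sh_alpha P i * real (s' i)\<rfloor>; sh_phi P i \<noteq> 0;
       \<not> (\<exists>n'<length bs. (fst (bs ! n') = BlueOnly i \<or> (\<exists>j'. fst (bs ! n') = Mixed i j')) \<and>
              cnt P Blue i (bs ! n') < sh_beta P i);
       \<not> (\<exists>n'<length bs. \<exists>j'. fst (bs ! n') = RedOnly j' \<and>
              sh_Delta P (sh_phi P i) \<ge> real (sh_gamma P j') * sh_t P j') \<rbrakk>
     \<Longrightarrow> sh_step P (bs, s, e) x (bs @ [(BlueOnly i, [(x, Blue)])], s', e)"

inductive sh_exec :: "shparams \<Rightarrow> state \<Rightarrow> real list \<Rightarrow> state \<Rightarrow> bool" for P where
  exec_nil: "sh_exec P st [] st"
| exec_cons: "\<lbrakk> sh_step P st x st'; sh_exec P st' xs st'' \<rbrakk> \<Longrightarrow> sh_exec P st (x # xs) st''"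

definition nbins :: "state \<Rightarrow> nat" where
  "nbins st = length (fst st)"

end

theory Submission
  imports Defs
begin

text \<open>Charge every bin to the items it contains. The bins reserved for a group (the \<open>(i)\<close>
  bins, the blue parts of \<open>(i,?)\<close> and \<open>(i,j)\<close> bins, the red parts of \<open>(?,j)\<close> and
  \<open>(i,j)\<close> bins) are filled one at a time to a fixed number of items, so all but one of
  them are full; the counters keep the number of red type-\<open>i\<close> items at
  \<open>\<lfloor>\<alpha>\<^sub>i s\<^sub>i\<rfloor>\<close>; and Next Fit fills all its bins but the current one beyond
  \<open>1 - \<epsilon>\<close>. Hence, if blue items of type \<open>i\<close> get a share \<open>c\<^sub>i\<close> and red items of
  type \<open>j\<close> a share \<open>d\<^sub>j\<close> of their bins such that every bin collects at least \<open>1\<close>,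
  the number of bins is bounded by the corresponding weights up to \<open>1 + 3k\<close>.
  If no \<open>(i,?)\<close> bin is open, the shares \<open>c = 0\<close>, \<open>d = 1\<close> give \<open>W\<^sup>K\<^sup>+\<^sup>1\<close>.
  Otherwise let \<open>l\<close> be the largest \<open>\<phi>(i)\<close> of an open \<open>(i,?)\<close> bin: since an
  \<open>(i,?)\<close> bin and a \<open>(?,j)\<close> bin that fit together never coexist, every open \<open>(?,j)\<close>
  bin has \<open>l < sh_varphi P j\<close>, which makes the shares of \<open>W\<^sup>K\<^sup>+\<^sup>1\<^sup>-\<^sup>l\<close> sufficient.\<close>

section \<open>Parameters\<close>

lemma sh_t_strict_antimono:
  assumes adm: "sh_admissible P" and "1 \<le> a" "a < b" "b \<le> sh_k P + 2"
  shows "sh_t P b < sh_t P a"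
  using assms(3,4)
proof (induction b)
  case (Suc b)
  have step: "sh_t P (Suc b) < sh_t P b"
    using adm Suc.prems assms(2) unfolding sh_admissible_def by auto
  show ?case
  proof (cases "a = b")
    case False
    then show ?thesis using Suc step by simp
  qed (use step in simp)
qed simp

lemma sh_t_antimono:
  assumes "sh_admissible P" "1 \<le> a" "a \<le> b" "b \<le> sh_k P + 2"
  shows "sh_t P b \<le> sh_t P a"
  using sh_t_strict_antimono[of P a b] assms by (cases "a = b") auto

lemma sh_t_pos:
  assumes adm: "sh_admissible P" and "1 \<le> i" "i \<le> sh_k P + 1"
  shows "0 < sh_t P i"
  using sh_t_strict_antimono[OF adm, of i "sh_k P + 2"] assms adm unfolding sh_admissible_def
    by auto

lemma sh_t_le_1:
  assumes adm: "sh_admissible P" and "1 \<le> i" "i \<le> sh_k P + 2"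
  shows "sh_t P i \<le> 1"
  using sh_t_antimono[OF adm, of 1 i] assms adm unfolding sh_admissible_def by auto

lemma sh_type_eqI:
  assumes adm: "sh_admissible P" and i: "1 \<le> i" "i \<le> sh_k P + 1" "sh_t P (i + 1) < x" "x \<le> sh_t P i"
  shows "sh_type P x = i"
  unfolding sh_type_def
proof (rule the_equality)
  fix j assume j: "1 \<le> j \<and> j \<le> sh_k P + 1 \<and> sh_t P (j + 1) < x \<and> x \<le> sh_t P j"
  have False if "j < i"
    using sh_t_antimono[OF adm, of "j + 1" i] that i j by auto
  moreover have False if "i < j"
    using sh_t_antimono[OF adm, of "i + 1" j] that i j by auto
  ultimately show "j = i" by (metis linorder_neqE_nat)
qed (use i in simp)

lemma sh_type_t:
  assumes adm: "sh_admissible P" and "1 \<le> i" "i \<le> sh_k P + 1"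
  shows "sh_type P (sh_t P i) = i"
  using assms adm by (intro sh_type_eqI) (auto simp: sh_admissible_def)

lemma sh_type_spec:
  assumes adm: "sh_admissible P" and x: "0 < x" "x \<le> 1"
  shows "1 \<le> sh_type P x" "sh_type P x \<le> sh_k P + 1"
    "sh_t P (sh_type P x + 1) < x" "x \<le> sh_t P (sh_type P x)"
proof -
  define S where "S = {i. 1 \<le> i \<and> i \<le> sh_k P + 1 \<and> x \<le> sh_t P i}"
  define i where "i = Max S"
  have "finite S" unfolding S_def by (rule finite_subset[of _ "{..sh_k P + 1}"]) auto
  moreover have "1 \<in> S" using adm x unfolding S_def sh_admissible_def by auto
  ultimately have iS: "i \<in> S" and imax: "\<And>j. j \<in> S \<Longrightarrow> j \<le> i"
    unfolding i_def by (auto intro: Max_in)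
  have "sh_t P (i + 1) < x"
  proof (cases "i = sh_k P + 1")
    case True
    then show ?thesis using adm x unfolding sh_admissible_def by auto
  next
    case False
    then have "i + 1 \<notin> S" using imax by fastforce
    then show ?thesis using False iS unfolding S_def by auto
  qed
  with iS have "sh_type P x = i" unfolding S_def by (intro sh_type_eqI[OF adm]) auto
  with \<open>sh_t P (i + 1) < x\<close> iS show "1 \<le> sh_type P x" "sh_type P x \<le> sh_k P + 1"
    "sh_t P (sh_type P x + 1) < x" "x \<le> sh_t P (sh_type P x)"
    unfolding S_def by simp_all
qed

lemma sh_eps_bounds:
  assumes adm: "sh_admissible P"
  shows "0 < sh_eps P" "sh_eps P < 1"
  using sh_t_pos[OF adm, of "sh_k P + 1"] sh_t_strict_antimono[OF adm, of 1 "sh_k P + 1"] adm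
  unfolding sh_eps_def sh_admissible_def by auto

lemma sh_beta_ge_1:
  assumes adm: "sh_admissible P" and "1 \<le> i" "i \<le> sh_k P"
  shows "1 \<le> sh_beta P i"
proof -
  have "0 < sh_t P i" "sh_t P i \<le> 1"
    using sh_t_pos[OF adm, of i] sh_t_le_1[OF adm, of i] assms by auto
  then have "1 \<le> 1 / sh_t P i" by (simp add: field_simps)
  then show ?thesis unfolding sh_beta_def by linarith
qed

lemma sh_Delta_mono:
  assumes adm: "sh_admissible P" and "a \<le> b" "b \<le> sh_K P"
  shows "sh_Delta P a \<le> sh_Delta P b"
  using assms(2,3)
proof (induction b)
  case (Suc b)
  show ?case
  proof (cases "a = Suc b")
    case False
    then have "sh_Delta P a \<le> sh_Delta P b" "b < sh_K P" using Suc by auto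
    moreover have "sh_Delta P b < sh_Delta P (Suc b)"
      using adm \<open>b < sh_K P\<close> unfolding sh_admissible_def by auto
    ultimately show ?thesis by simp
  qed simp
qed simp

lemma sh_gamma_eq_0_iff: "sh_gamma P i = 0 \<longleftrightarrow> sh_Delta P (sh_K P) < sh_t P i"
  unfolding sh_gamma_def by auto

lemma sh_varphi_spec:
  assumes adm: "sh_admissible P" and "1 \<le> i" "i \<le> sh_k P" and "0 < sh_gamma P i"
  shows "1 \<le> sh_varphi P i" "sh_varphi P i \<le> sh_K P" "sh_t P i \<le> sh_Delta P (sh_varphi P i)"
proof -
  have fits: "sh_t P i \<le> sh_Delta P (sh_K P)" using assms(4) sh_gamma_eq_0_iff[of P i] by simp
  moreover have "0 < sh_t P i" using sh_t_pos[OF adm] assms(2,3) by simp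
  moreover have "sh_Delta P 0 = 0" using adm unfolding sh_admissible_def by simp
  ultimately have "sh_K P \<noteq> 0" by (metis not_le)
  then have "\<exists>j. 1 \<le> j \<and> j \<le> sh_K P \<and> sh_t P i \<le> sh_Delta P j"
    using fits by (intro exI[of _ "sh_K P"]) auto
  from LeastI_ex[OF this] fits
  show "1 \<le> sh_varphi P i" "sh_varphi P i \<le> sh_K P" "sh_t P i \<le> sh_Delta P (sh_varphi P i)"
    unfolding sh_varphi_def by simp_all
qed

lemma sh_varphi_eq_0_iff:
  assumes "sh_admissible P" "1 \<le> i" "i \<le> sh_k P"
  shows "sh_varphi P i = 0 \<longleftrightarrow> sh_gamma P i = 0"
  using sh_varphi_spec[OF assms] sh_gamma_eq_0_iff[of P i] by (auto simp: sh_varphi_def)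

lemma sh_varphi_le_K:
  assumes "sh_admissible P" "1 \<le> i" "i \<le> sh_k P"
  shows "sh_varphi P i \<le> sh_K P"
  using sh_varphi_spec[OF assms] sh_varphi_eq_0_iff[OF assms] by (cases "sh_gamma P i = 0") auto

text \<open>Either \<open>\<gamma>\<^sub>i = 1\<close>, and \<open>t\<^sub>i \<le> \<Delta>\<^sub>l\<close> by the choice of \<open>sh_varphi P i\<close>, or
  \<open>\<gamma>\<^sub>i = \<lfloor>\<Delta>\<^sub>1 / t\<^sub>i\<rfloor>\<close>.\<close>
lemma sh_gamma_t_le_Delta:
  assumes adm: "sh_admissible P" and i: "1 \<le> i" "i \<le> sh_k P" and g: "0 < sh_gamma P i"
    and l: "sh_varphi P i \<le> l" "l \<le> sh_K P"
  shows "real (sh_gamma P i) * sh_t P i \<le> sh_Delta P l"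
proof -
  have "1 \<le> sh_varphi P i" and tl: "sh_t P i \<le> sh_Delta P l"
    using sh_varphi_spec[OF adm i g] sh_Delta_mono[OF adm l] by auto
  have tp: "0 < sh_t P i" using sh_t_pos[OF adm] i by simp
  define q where "q = sh_Delta P 1 / sh_t P i"
  have gdef: "sh_gamma P i = max 1 (nat \<lfloor>q\<rfloor>)"
    using g unfolding sh_gamma_def q_def by (simp split: if_splits)
  show ?thesis
  proof (cases "nat \<lfloor>q\<rfloor> \<le> 1")
    case True
    then show ?thesis using gdef tl by simp
  next
    case False
    then have "real (sh_gamma P i) \<le> q" using gdef by linarith
    then have "real (sh_gamma P i) * sh_t P i \<le> sh_Delta P 1"
      using tp unfolding q_def by (simp add: field_simps)
    also have "\<dots> \<le> sh_Delta P l" using sh_Delta_mono[OF adm, of 1 l] l \<open>1 \<le> sh_varphi P i\<close> by simp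
    finally show ?thesis .
  qed
qed

section \<open>Bins, groups and deficits\<close>

lemma sum_list_map_list_update:
  fixes f :: "'a \<Rightarrow> 'b::ab_group_add"
  assumes "n < length xs"
  shows "sum_list (map f (xs[n := y])) = sum_list (map f xs) - f (xs ! n) + f y"
  using assms
proof (induction xs arbitrary: n)
  case (Cons a xs)
  then show ?case by (cases n) auto
qed simp

lemma filter_list_update_if_not:
  assumes "\<not> Q (xs ! n)" "\<not> Q y"
  shows "filter Q (xs[n := y]) = filter Q xs"
  using assms
proof (induction xs arbitrary: n)
  case (Cons a xs)
  then show ?case by (cases n) auto
qed simp

definition blue_group :: "nat \<Rightarrow> label \<Rightarrow> bool" where
  "blue_group i l \<longleftrightarrow> l = BlueOnly i \<or> (\<exists>j. l = Mixed i j)"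

definition red_group :: "nat \<Rightarrow> label \<Rightarrow> bool" where
  "red_group j l \<longleftrightarrow> l = RedOnly j \<or> (\<exists>i. l = Mixed i j)"

lemma blue_group_simps [simp]:
  "blue_group i (BlueOnly i') \<longleftrightarrow> i = i'" "blue_group i (Mixed i' j) \<longleftrightarrow> i = i'"
  "\<not> blue_group i (RedOnly j)" "\<not> blue_group i (Single j)" "\<not> blue_group i Small"
  by (auto simp: blue_group_def)

lemma red_group_simps [simp]:
  "red_group j (RedOnly j') \<longleftrightarrow> j = j'" "red_group j (Mixed i j') \<longleftrightarrow> j = j'"
  "\<not> red_group j (BlueOnly i)" "\<not> red_group j (Single i)" "\<not> red_group j Small"
  by (auto simp: red_group_def)

text \<open>The bins of a group are filled to capacity \<open>cap\<close> one at a time, and a new one is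
  opened only when all of them are full; hence the total shortfall of the group stays at
  most \<open>cap\<close>.\<close>
definition deficit :: "(label \<Rightarrow> bool) \<Rightarrow> real \<Rightarrow> (bin \<Rightarrow> real) \<Rightarrow> bin list \<Rightarrow> real" where
  "deficit G cap f bs = sum_list (map (\<lambda>b. if G (fst b) then cap - f b else 0) bs)"

lemma deficit_nonpos_if_full:
  assumes "\<forall>b\<in>set bs. G (fst b) \<longrightarrow> cap \<le> f b"
  shows "deficit G cap f bs \<le> 0"
  unfolding deficit_def using assms by (intro sum_list_nonpos) auto

lemma deficit_list_update:
  assumes n: "n < length bs" and inv: "deficit G cap f bs \<le> cap"
    and mono: "f (bs ! n) \<le> f b'"
    and stay: "G (fst (bs ! n)) \<Longrightarrow> G (fst b')"
    and enter: "\<not> G (fst (bs ! n)) \<Longrightarrow> G (fst b') \<Longrightarrow>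
      (\<forall>b\<in>set bs. G (fst b) \<longrightarrow> cap \<le> f b) \<and> 0 \<le> f b'"
  shows "deficit G cap f (bs[n := b']) \<le> cap"
proof -
  have eq: "deficit G cap f (bs[n := b']) =
      deficit G cap f bs - (if G (fst (bs ! n)) then cap - f (bs ! n) else 0)
        + (if G (fst b') then cap - f b' else 0)"
    unfolding deficit_def using n by (rule sum_list_map_list_update)
  show ?thesis
  proof (cases "G (fst (bs ! n))")
    case True
    then show ?thesis using eq inv mono stay by auto
  next
    case False
    show ?thesis
    proof (cases "G (fst b')")
      case True
      then show ?thesis using eq False enter deficit_nonpos_if_full[of bs G cap f] by auto
    qed (use eq False inv in auto)
  qed
qed

lemma deficit_snoc:
  assumes "deficit G cap f bs \<le> cap"
    and "G (fst b') \<Longrightarrow> (\<forall>b\<in>set bs. G (fst b) \<longrightarrow> cap \<le> f b) \<and> 0 \<le> f b'"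
  shows "deficit G cap f (bs @ [b']) \<le> cap"
  using assms deficit_nonpos_if_full[of bs G cap f] by (auto simp: deficit_def)

definition count_bins :: "(label \<Rightarrow> bool) \<Rightarrow> bin list \<Rightarrow> real" where
  "count_bins G bs = sum_list (map (\<lambda>b. of_bool (G (fst b))) bs)"

lemma count_bins_eq_0: "\<forall>b\<in>set bs. \<not> G (fst b) \<Longrightarrow> count_bins G bs = 0"
  unfolding count_bins_def by (induction bs) auto

lemma count_bins_le_if_deficit_le:
  assumes "deficit G cap f bs \<le> cap" "0 < cap" "\<forall>b\<in>set bs. 0 \<le> f b"
  shows "count_bins G bs \<le> 1 + sum_list (map f bs) / cap"
proof -
  have "deficit G cap f bs = cap * count_bins G bs
      - sum_list (map (\<lambda>b. if G (fst b) then f b else 0) bs)"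
    unfolding deficit_def count_bins_def by (induction bs) (auto simp: algebra_simps)
  moreover have "sum_list (map (\<lambda>b. if G (fst b) then f b else 0) bs) \<le> sum_list (map f bs)"
    using assms(3) by (intro sum_list_mono) auto
  ultimately have "cap * count_bins G bs \<le> cap * (1 + sum_list (map f bs) / cap)"
    using assms(1,2) by (simp add: algebra_simps)
  then show ?thesis using assms(2) by simp
qed

lemma cnt_snoc [simp]:
  "cnt P c i (lab, snd b @ [(x, c')]) = cnt P c i b + (if c' = c \<and> sh_type P x = i then 1 else 0)"
  by (simp add: cnt_def)

lemma cnt_single [simp]:
  "cnt P c i (lab, [(x, c')]) = (if c' = c \<and> sh_type P x = i then 1 else 0)"
  by (simp add: cnt_def)

lemma level_snoc [simp]: "level (lab, snd b @ [(x, c)]) = level b + x"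
  by (simp add: level_def)

lemma level_single [simp]: "level (lab, [(x, c)]) = x"
  by (simp add: level_def)

definition items :: "shparams \<Rightarrow> color \<Rightarrow> nat \<Rightarrow> bin list \<Rightarrow> real" where
  "items P c i bs = sum_list (map (\<lambda>b. real (cnt P c i b)) bs)"

lemma items_put:
  "n < length bs \<Longrightarrow>
    items P c i (put bs n lab x c') = items P c i bs + (if c' = c \<and> sh_type P x = i then 1 else 0)"
  unfolding items_def put_def by (simp add: sum_list_map_list_update)

lemma items_snoc:
  "items P c i (bs @ [(lab, [(x, c')])]) =
    items P c i bs + (if c' = c \<and> sh_type P x = i then 1 else 0)"
  unfolding items_def by simp

definition small_bins :: "bin list \<Rightarrow> bin list" where
  "small_bins bs = filter (\<lambda>b. fst b = Small) bs"

definition small_load :: "bin list \<Rightarrow> real" where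
  "small_load bs = sum_list (map level (small_bins bs))"

definition current_small_level :: "bin list \<Rightarrow> real" where
  "current_small_level bs = (if small_bins bs = [] then 0 else level (last (small_bins bs)))"

lemma small_load_put:
  "n < length bs \<Longrightarrow> fst (bs ! n) \<noteq> Small \<Longrightarrow> lab \<noteq> Small \<Longrightarrow>
    small_load (put bs n lab x c) = small_load bs"
  unfolding small_load_def small_bins_def put_def by (subst filter_list_update_if_not) auto

lemma small_load_snoc:
  "small_load (bs @ [(lab, [(x, c)])]) = small_load bs + (if lab = Small then x else 0)"
  unfolding small_load_def small_bins_def by simp

lemma count_bins_Small: "count_bins (\<lambda>l. l = Small) bs = real (length (small_bins bs))"
  unfolding count_bins_def small_bins_def by (induction bs) auto

lemma last_small_bins_conv_nth:
  assumes "small_bins bs \<noteq> []"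
  shows "\<exists>n<length bs. fst (bs ! n) = Small \<and>
    (\<forall>m. n < m \<and> m < length bs \<longrightarrow> fst (bs ! m) \<noteq> Small) \<and> last (small_bins bs) = bs ! n"
  using assms
proof (induction bs rule: rev_induct)
  case (snoc b bs)
  show ?case
  proof (cases "fst b = Small")
    case True
    then show ?thesis by (intro exI[of _ "length bs"]) (auto simp: small_bins_def nth_append)
  next
    case False
    then have "small_bins bs \<noteq> []" "small_bins (bs @ [b]) = small_bins bs"
      using snoc.prems by (auto simp: small_bins_def)
    with snoc.IH obtain n where n: "n < length bs" "fst (bs ! n) = Small"
      "\<forall>m. n < m \<and> m < length bs \<longrightarrow> fst (bs ! m) \<noteq> Small" "last (small_bins bs) = bs ! n"
      by blast
    have "\<forall>m. n < m \<and> m < length (bs @ [b]) \<longrightarrow> fst ((bs @ [b]) ! m) \<noteq> Small"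
      using n(3) False by (auto simp: nth_append)
    then show ?thesis
      using n \<open>small_bins (bs @ [b]) = small_bins bs\<close> by (intro exI[of _ n]) (auto simp: nth_append)
  qed
qed (simp add: small_bins_def)

section \<open>The bin invariant\<close>

definition label_ok :: "shparams \<Rightarrow> label \<Rightarrow> bool" where
  "label_ok P l = (case l of
       Single i \<Rightarrow> 1 \<le> i \<and> i \<le> sh_k P \<and> sh_phi P i = 0
     | BlueOnly i \<Rightarrow> 1 \<le> i \<and> i \<le> sh_k P \<and> sh_phi P i \<noteq> 0
     | RedOnly j \<Rightarrow> 1 \<le> j \<and> j \<le> sh_k P \<and> 0 < sh_alpha P j
     | Mixed i j \<Rightarrow> 1 \<le> i \<and> i \<le> sh_k P \<and> sh_phi P i \<noteq> 0 \<and> 1 \<le> j \<and> j \<le> sh_k P \<and> 0 < sh_alpha P j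
     | Small \<Rightarrow> True)"

lemma label_ok_Single: "label_ok P (Single i) \<longleftrightarrow> 1 \<le> i \<and> i \<le> sh_k P \<and> sh_phi P i = 0"
  by (simp add: label_ok_def)

lemma label_ok_blue_group:
  "label_ok P l \<Longrightarrow> blue_group i l \<Longrightarrow> 1 \<le> i \<and> i \<le> sh_k P \<and> sh_phi P i \<noteq> 0"
  by (auto simp: label_ok_def blue_group_def)

lemma label_ok_red_group:
  "label_ok P l \<Longrightarrow> red_group j l \<Longrightarrow> 1 \<le> j \<and> j \<le> sh_k P \<and> 0 < sh_alpha P j"
  by (auto simp: label_ok_def red_group_def)

text \<open>An \<open>(i,?)\<close> bin is opened only if no \<open>(?,j)\<close> bin can take the item, and
  vice versa.\<close>
definition no_mergeable_pair :: "shparams \<Rightarrow> label set \<Rightarrow> bool" where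
  "no_mergeable_pair P A \<longleftrightarrow> (\<forall>i j. BlueOnly i \<in> A \<longrightarrow> RedOnly j \<in> A \<longrightarrow>
      sh_Delta P (sh_phi P i) < real (sh_gamma P j) * sh_t P j)"

lemma no_mergeable_pair_subset: "A \<subseteq> B \<Longrightarrow> no_mergeable_pair P B \<Longrightarrow> no_mergeable_pair P A"
  by (auto simp: no_mergeable_pair_def)

lemma no_mergeable_pair_insert:
  "no_mergeable_pair P A \<Longrightarrow> \<forall>i. l \<noteq> BlueOnly i \<Longrightarrow> \<forall>j. l \<noteq> RedOnly j \<Longrightarrow>
    no_mergeable_pair P (insert l A)"
  by (auto simp: no_mergeable_pair_def)

lemma no_mergeable_pair_insert_RedOnly:
  "no_mergeable_pair P A \<Longrightarrow> \<forall>i. BlueOnly i \<in> A \<longrightarrow>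
    sh_Delta P (sh_phi P i) < real (sh_gamma P j) * sh_t P j \<Longrightarrow>
    no_mergeable_pair P (insert (RedOnly j) A)"
  by (auto simp: no_mergeable_pair_def)

lemma no_mergeable_pair_insert_BlueOnly:
  "no_mergeable_pair P A \<Longrightarrow> \<forall>j. RedOnly j \<in> A \<longrightarrow>
    sh_Delta P (sh_phi P i) < real (sh_gamma P j) * sh_t P j \<Longrightarrow>
    no_mergeable_pair P (insert (BlueOnly i) A)"
  by (auto simp: no_mergeable_pair_def)

text \<open>The last conjunct is the Next Fit invariant: every small bin but the current one
  was closed with level greater than \<open>1 - \<epsilon>\<close>.\<close>
definition bins_inv :: "shparams \<Rightarrow> bin list \<Rightarrow> bool" where
  "bins_inv P bs \<longleftrightarrow>
   (\<forall>i. deficit (\<lambda>l. l = Single i) (sh_beta P i) (\<lambda>b. real (cnt P Blue i b)) bs \<le> sh_beta P i) \<and>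
   (\<forall>i. deficit (blue_group i) (sh_beta P i) (\<lambda>b. real (cnt P Blue i b)) bs \<le> sh_beta P i) \<and>
   (\<forall>j. deficit (red_group j) (sh_gamma P j) (\<lambda>b. real (cnt P Red j b)) bs \<le> sh_gamma P j) \<and>
   (\<forall>b\<in>set bs. label_ok P (fst b) \<and> 0 \<le> level b) \<and>
   no_mergeable_pair P (fst ` set bs) \<and>
   (real (length (small_bins bs)) - 1) * (1 - sh_eps P) + current_small_level bs \<le> small_load bs"

lemma bins_invD:
  assumes "bins_inv P bs"
  shows "deficit (\<lambda>l. l = Single i) (sh_beta P i) (\<lambda>b. real (cnt P Blue i b)) bs \<le> sh_beta P i"
    "deficit (blue_group i) (sh_beta P i) (\<lambda>b. real (cnt P Blue i b)) bs \<le> sh_beta P i"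
    "deficit (red_group i) (sh_gamma P i) (\<lambda>b. real (cnt P Red i b)) bs \<le> sh_gamma P i"
    "\<And>b. b \<in> set bs \<Longrightarrow> label_ok P (fst b) \<and> 0 \<le> level b"
    "no_mergeable_pair P (fst ` set bs)"
    "(real (length (small_bins bs)) - 1) * (1 - sh_eps P) + current_small_level bs \<le> small_load bs"
  using assms unfolding bins_inv_def by auto

lemma bins_inv_Nil: "sh_admissible P \<Longrightarrow> bins_inv P []"
  using sh_eps_bounds[of P]
  by (simp add: bins_inv_def deficit_def small_bins_def small_load_def current_small_level_def
      no_mergeable_pair_def)

lemma bins_inv_put:
  assumes inv: "bins_inv P bs" and n: "n < length bs" and x: "0 < x"
    and small: "fst (bs ! n) \<noteq> Small" "lab \<noteq> Small"
    and single: "\<And>i. fst (bs ! n) = Single i \<longleftrightarrow> lab = Single i"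
    and blue_stay: "\<And>i. blue_group i (fst (bs ! n)) \<Longrightarrow> blue_group i lab"
    and blue_enter: "\<And>i. blue_group i lab \<Longrightarrow> \<not> blue_group i (fst (bs ! n)) \<Longrightarrow>
      \<forall>b\<in>set bs. blue_group i (fst b) \<longrightarrow> sh_beta P i \<le> cnt P Blue i b"
    and red_stay: "\<And>j. red_group j (fst (bs ! n)) \<Longrightarrow> red_group j lab"
    and red_enter: "\<And>j. red_group j lab \<Longrightarrow> \<not> red_group j (fst (bs ! n)) \<Longrightarrow>
      \<forall>b\<in>set bs. red_group j (fst b) \<longrightarrow> sh_gamma P j \<le> cnt P Red j b"
    and lab: "label_ok P lab"
    and no_new_BlueOnly: "\<And>i. lab = BlueOnly i \<Longrightarrow> lab = fst (bs ! n)"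
    and no_new_RedOnly: "\<And>j. lab = RedOnly j \<Longrightarrow> lab = fst (bs ! n)"
  shows "bins_inv P (put bs n lab x c)"
proof -
  let ?b' = "(lab, snd (bs ! n) @ [(x, c)])"
  note I = bins_invD[OF inv]
  have nth: "bs ! n \<in> set bs" using n by simp
  have set_upd: "set (bs[n := ?b']) \<subseteq> insert ?b' (set bs)"
    by (rule set_update_subset_insert)
  have "no_mergeable_pair P (insert lab (fst ` set bs))"
  proof (cases "(\<exists>i. lab = BlueOnly i) \<or> (\<exists>j. lab = RedOnly j)")
    case True
    then have "lab \<in> fst ` set bs" using no_new_BlueOnly no_new_RedOnly nth by force
    then show ?thesis using I(5) by (simp add: insert_absorb)
  qed (use no_mergeable_pair_insert[OF I(5)] in auto)
  then have "no_mergeable_pair P (fst ` set (bs[n := ?b']))"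
    by (rule no_mergeable_pair_subset[rotated]) (use set_upd in auto)
  moreover have small_bins: "small_bins (bs[n := ?b']) = small_bins bs"
    unfolding small_bins_def by (rule filter_list_update_if_not) (use small in auto)
  moreover from small_bins have "small_load (bs[n := ?b']) = small_load bs"
    "current_small_level (bs[n := ?b']) = current_small_level bs"
    unfolding small_load_def current_small_level_def by simp_all
  moreover have "\<forall>b\<in>set (bs[n := ?b']). label_ok P (fst b) \<and> 0 \<le> level b"
    using set_upd I(4) nth lab x by fastforce
  moreover have "deficit (\<lambda>l. l = Single i) (sh_beta P i) (\<lambda>b. real (cnt P Blue i b)) (bs[n := ?b'])
      \<le> sh_beta P i" for i
    by (rule deficit_list_update[OF n I(1)]) (use single in auto)
  moreover have "deficit (blue_group i) (sh_beta P i) (\<lambda>b. real (cnt P Blue i b)) (bs[n := ?b'])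
      \<le> sh_beta P i" for i
    by (rule deficit_list_update[OF n I(2)]) (use blue_stay blue_enter in auto)
  moreover have "deficit (red_group j) (sh_gamma P j) (\<lambda>b. real (cnt P Red j b)) (bs[n := ?b'])
      \<le> sh_gamma P j" for j
    by (rule deficit_list_update[OF n I(3)]) (use red_stay red_enter in auto)
  ultimately show ?thesis
    using I(6) small_bins unfolding bins_inv_def put_def by simp
qed

lemma bins_inv_snoc:
  assumes inv: "bins_inv P bs" and x: "0 < x" and small: "lab \<noteq> Small"
    and single: "\<And>i. lab = Single i \<Longrightarrow>
      \<forall>b\<in>set bs. fst b = Single i \<longrightarrow> sh_beta P i \<le> cnt P Blue i b"
    and blue: "\<And>i. blue_group i lab \<Longrightarrow>
      \<forall>b\<in>set bs. blue_group i (fst b) \<longrightarrow> sh_beta P i \<le> cnt P Blue i b"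
    and red: "\<And>j. red_group j lab \<Longrightarrow>
      \<forall>b\<in>set bs. red_group j (fst b) \<longrightarrow> sh_gamma P j \<le> cnt P Red j b"
    and lab: "label_ok P lab"
    and merge: "no_mergeable_pair P (insert lab (fst ` set bs))"
  shows "bins_inv P (bs @ [(lab, [(x, c)])])"
proof -
  note I = bins_invD[OF inv]
  have small_bins: "small_bins (bs @ [(lab, [(x, c)])]) = small_bins bs"
    unfolding small_bins_def using small by simp
  then have "small_load (bs @ [(lab, [(x, c)])]) = small_load bs"
    "current_small_level (bs @ [(lab, [(x, c)])]) = current_small_level bs"
    unfolding small_load_def current_small_level_def by simp_all
  moreover have "deficit (\<lambda>l. l = Single i) (sh_beta P i) (\<lambda>b. real (cnt P Blue i b))
      (bs @ [(lab, [(x, c)])]) \<le> sh_beta P i" for i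
    by (rule deficit_snoc[OF I(1)]) (use single in auto)
  moreover have "deficit (blue_group i) (sh_beta P i) (\<lambda>b. real (cnt P Blue i b))
      (bs @ [(lab, [(x, c)])]) \<le> sh_beta P i" for i
    by (rule deficit_snoc[OF I(2)]) (use blue in auto)
  moreover have "deficit (red_group j) (sh_gamma P j) (\<lambda>b. real (cnt P Red j b))
      (bs @ [(lab, [(x, c)])]) \<le> sh_gamma P j" for j
    by (rule deficit_snoc[OF I(3)]) (use red in auto)
  ultimately show ?thesis
    using I(4,6) x lab merge small_bins unfolding bins_inv_def by simp
qed

lemma small_bins_list_update_current:
  assumes n: "n < length bs" "fst (bs ! n) = Small"
    and current: "\<forall>m. n < m \<and> m < length bs \<longrightarrow> fst (bs ! m) \<noteq> Small"
    and b': "fst b' = Small"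
  shows "small_bins bs = small_bins (take n bs) @ [bs ! n]"
    "small_bins (bs[n := b']) = small_bins (take n bs) @ [b']"
proof -
  have "\<forall>y\<in>set (drop (Suc n) bs). fst y \<noteq> Small"
  proof
    fix y assume "y \<in> set (drop (Suc n) bs)"
    then obtain j where "j < length (drop (Suc n) bs)" "y = drop (Suc n) bs ! j"
      by (auto simp: in_set_conv_nth)
    then show "fst y \<noteq> Small" using current by auto
  qed
  then have drop: "small_bins (drop (Suc n) bs) = []"
    by (simp add: small_bins_def filter_empty_conv)
  have "small_bins bs = small_bins (take n bs @ bs ! n # drop (Suc n) bs)"
    by (rule arg_cong[OF id_take_nth_drop[OF n(1)]])
  also have "\<dots> = small_bins (take n bs) @ [bs ! n]"
    using n(2) drop by (simp add: small_bins_def)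
  finally show "small_bins bs = small_bins (take n bs) @ [bs ! n]" .
  show "small_bins (bs[n := b']) = small_bins (take n bs) @ [b']"
    using upd_conv_take_nth_drop[OF n(1), of b'] b' drop
    unfolding small_bins_def by simp
qed

lemma bins_inv_next_fit_put:
  assumes inv: "bins_inv P bs" and n: "n < length bs" "fst (bs ! n) = Small" and x: "0 < x"
    and current: "\<forall>m. n < m \<and> m < length bs \<longrightarrow> fst (bs ! m) \<noteq> Small"
  shows "bins_inv P (put bs n Small x c)"
proof -
  let ?b' = "(Small, snd (bs ! n) @ [(x, c)])"
  note I = bins_invD[OF inv]
  note small = small_bins_list_update_current[OF n current, of ?b', simplified]
  have nth: "bs ! n \<in> set bs" using n by simp
  have set_upd: "set (bs[n := ?b']) \<subseteq> insert ?b' (set bs)"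
    by (rule set_update_subset_insert)
  have "\<forall>b\<in>set (bs[n := ?b']). label_ok P (fst b) \<and> 0 \<le> level b"
    using set_upd I(4) nth x by (fastforce simp: label_ok_def)
  moreover have "fst ` set (bs[n := ?b']) \<subseteq> insert Small (fst ` set bs)"
    using set_upd by force
  then have "no_mergeable_pair P (fst ` set (bs[n := ?b']))"
    using no_mergeable_pair_subset no_mergeable_pair_insert[OF I(5), of Small] by simp
  moreover have "deficit (\<lambda>l. l = Single i) (sh_beta P i) (\<lambda>b. real (cnt P Blue i b)) (bs[n := ?b'])
      \<le> sh_beta P i" for i
    by (rule deficit_list_update[OF n(1) I(1)]) (use n in auto)
  moreover have "deficit (blue_group i) (sh_beta P i) (\<lambda>b. real (cnt P Blue i b)) (bs[n := ?b'])
      \<le> sh_beta P i" for i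
    by (rule deficit_list_update[OF n(1) I(2)]) (use n in auto)
  moreover have "deficit (red_group j) (sh_gamma P j) (\<lambda>b. real (cnt P Red j b)) (bs[n := ?b'])
      \<le> sh_gamma P j" for j
    by (rule deficit_list_update[OF n(1) I(3)]) (use n in auto)
  ultimately show ?thesis
    using I(6) unfolding bins_inv_def put_def small_load_def current_small_level_def small by simp
qed

lemma small_load_next_fit_put:
  assumes "n < length bs" "fst (bs ! n) = Small"
    and "\<forall>m. n < m \<and> m < length bs \<longrightarrow> fst (bs ! m) \<noteq> Small"
  shows "small_load (put bs n Small x c) = small_load bs + x"
  using small_bins_list_update_current[OF assms, of "(Small, snd (bs ! n) @ [(x, c)])"]
  unfolding put_def small_load_def by simp

lemma bins_inv_next_fit_snoc:
  assumes inv: "bins_inv P bs" and x: "0 < x" "x \<le> sh_eps P"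
    and full: "\<forall>n. n < length bs \<and> fst (bs ! n) = Small \<and>
      (\<forall>m. n < m \<and> m < length bs \<longrightarrow> fst (bs ! m) \<noteq> Small) \<longrightarrow> level (bs ! n) + x > 1"
  shows "bins_inv P (bs @ [(Small, [(x, c)])])"
proof -
  let ?bs' = "bs @ [(Small, [(x, c)])]"
  note I = bins_invD[OF inv]
  have "real (length (small_bins bs)) * (1 - sh_eps P) \<le> small_load bs"
  proof (cases "small_bins bs = []")
    case False
    then obtain n where "n < length bs" "fst (bs ! n) = Small"
      "\<forall>m. n < m \<and> m < length bs \<longrightarrow> fst (bs ! m) \<noteq> Small" "last (small_bins bs) = bs ! n"
      using last_small_bins_conv_nth by blast
    then have "current_small_level bs > 1 - sh_eps P"
      using full x False by (force simp: current_small_level_def)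
    then show ?thesis using I(6) by (simp add: algebra_simps)
  qed (simp add: small_load_def)
  then have "(real (length (small_bins ?bs')) - 1) * (1 - sh_eps P) + current_small_level ?bs'
      \<le> small_load ?bs'"
    by (simp add: small_bins_def small_load_def current_small_level_def)
  moreover have "deficit (\<lambda>l. l = Single i) (sh_beta P i) (\<lambda>b. real (cnt P Blue i b)) ?bs'
      \<le> sh_beta P i" for i
    by (rule deficit_snoc[OF I(1)]) auto
  moreover have "deficit (blue_group i) (sh_beta P i) (\<lambda>b. real (cnt P Blue i b)) ?bs'
      \<le> sh_beta P i" for i
    by (rule deficit_snoc[OF I(2)]) auto
  moreover have "deficit (red_group j) (sh_gamma P j) (\<lambda>b. real (cnt P Red j b)) ?bs'
      \<le> sh_gamma P j" for j
    by (rule deficit_snoc[OF I(3)]) auto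
  moreover have "no_mergeable_pair P (fst ` set ?bs')"
    using no_mergeable_pair_insert[OF I(5), of Small] by simp
  ultimately show ?thesis
    using I(4) x unfolding bins_inv_def by (simp add: label_ok_def)
qed

section \<open>One step of the algorithm\<close>

definition counters_inv :: "shparams \<Rightarrow> bin list \<Rightarrow> (nat \<Rightarrow> nat) \<Rightarrow> (nat \<Rightarrow> nat) \<Rightarrow> bool" where
  "counters_inv P bs s e \<longleftrightarrow> (\<forall>i\<in>{1..sh_k P}.
     items P Red i bs = e i \<and> items P Blue i bs + e i = s i \<and> e i = nat \<lfloor>sh_alpha P i * s i\<rfloor>)"

lemma nat_floor_mult_Suc_eq_Suc:
  fixes a :: real and e s :: nat
  assumes "0 \<le> a" "a \<le> 1" "e = nat \<lfloor>a * s\<rfloor>" "e < nat \<lfloor>a * real (s + 1)\<rfloor>"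
  shows "e + 1 = nat \<lfloor>a * real (s + 1)\<rfloor>"
proof -
  have "a * real (s + 1) \<le> a * s + 1" using assms(2) by (simp add: algebra_simps)
  then have "\<lfloor>a * real (s + 1)\<rfloor> \<le> \<lfloor>a * s\<rfloor> + 1" by linarith
  moreover have "0 \<le> \<lfloor>a * s\<rfloor>" using assms(1) by simp
  ultimately show ?thesis using assms(3,4) by linarith
qed

lemma nat_floor_mult_Suc_eq:
  fixes a :: real and e s :: nat
  assumes "0 \<le> a" "e = nat \<lfloor>a * s\<rfloor>" "\<not> e < nat \<lfloor>a * real (s + 1)\<rfloor>"
  shows "e = nat \<lfloor>a * real (s + 1)\<rfloor>"
proof -
  have "\<lfloor>a * s\<rfloor> \<le> \<lfloor>a * real (s + 1)\<rfloor>" using assms(1) by (intro floor_mono mult_left_mono) auto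
  then show ?thesis using assms(2,3) by linarith
qed

lemma pos_if_less_nat_floor_mult:
  fixes a :: real and e s :: nat
  assumes "e < nat \<lfloor>a * real s\<rfloor>"
  shows "0 < a"
proof (rule ccontr)
  assume "\<not> 0 < a"
  then have "a * real s \<le> 0" by (simp add: mult_nonpos_nonneg)
  then show False using assms by linarith
qed

lemma counters_inv_red:
  assumes adm: "sh_admissible P" and inv: "counters_inv P bs s e" and i: "1 \<le> i" "i \<le> sh_k P"
    and s': "s' = s(i := s i + 1)" and e': "e' = e(i := e i + 1)"
    and red: "e i < nat \<lfloor>sh_alpha P i * real (s' i)\<rfloor>"
    and blue_items: "\<And>j. items P Blue j bs' = items P Blue j bs"
    and red_items: "\<And>j. items P Red j bs' = items P Red j bs + (if i = j then 1 else 0)"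
  shows "counters_inv P bs' s' e'"
proof -
  have "0 \<le> sh_alpha P i" "sh_alpha P i \<le> 1" using adm i unfolding sh_admissible_def by auto
  moreover have "e i = nat \<lfloor>sh_alpha P i * s i\<rfloor>" using inv i unfolding counters_inv_def by auto
  ultimately have "e i + 1 = nat \<lfloor>sh_alpha P i * real (s i + 1)\<rfloor>"
    using red s' by (intro nat_floor_mult_Suc_eq_Suc) simp_all
  then show ?thesis using inv blue_items red_items s' e' unfolding counters_inv_def by auto
qed

lemma counters_inv_blue:
  assumes adm: "sh_admissible P" and inv: "counters_inv P bs s e" and i: "1 \<le> i" "i \<le> sh_k P"
    and s': "s' = s(i := s i + 1)" and e': "e' = e"
    and blue: "\<not> e i < nat \<lfloor>sh_alpha P i * real (s' i)\<rfloor>"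
    and blue_items: "\<And>j. items P Blue j bs' = items P Blue j bs + (if i = j then 1 else 0)"
    and red_items: "\<And>j. items P Red j bs' = items P Red j bs"
  shows "counters_inv P bs' s' e'"
proof -
  have "0 \<le> sh_alpha P i" using adm i unfolding sh_admissible_def by auto
  moreover have "e i = nat \<lfloor>sh_alpha P i * s i\<rfloor>" using inv i unfolding counters_inv_def by auto
  ultimately have "e i = nat \<lfloor>sh_alpha P i * real (s i + 1)\<rfloor>"
    using blue s' by (intro nat_floor_mult_Suc_eq) simp_all
  then show ?thesis using inv blue_items red_items s' e' unfolding counters_inv_def by auto
qed

lemma sh_step_counters_inv:
  assumes step: "sh_step P (bs, s, e) x (bs', s', e')" and adm: "sh_admissible P"
    and x: "0 < x" "x \<le> 1" and inv: "counters_inv P bs s e"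
  shows "counters_inv P bs' s' e'"
proof -
  have type: "1 \<le> sh_type P x" using sh_type_spec(1)[OF adm x] .
  from step show ?thesis
  proof cases
    case (nf_fit n)
    then show ?thesis using inv by (auto simp: counters_inv_def items_put)
  next
    case nf_new
    then show ?thesis using inv by (auto simp: counters_inv_def items_snoc)
  next
    case (red1 i n)
    with type show ?thesis by (intro counters_inv_red[OF adm inv]) (auto simp: items_put)
  next
    case (red2 i n j)
    with type show ?thesis by (intro counters_inv_red[OF adm inv]) (auto simp: items_put)
  next
    case (red3 i n j)
    with type show ?thesis by (intro counters_inv_red[OF adm inv]) (auto simp: items_put)
  next
    case (red4 i)
    with type show ?thesis by (intro counters_inv_red[OF adm inv]) (auto simp: items_snoc)
  next
    case (blue1 i n)
    with type show ?thesis by (intro counters_inv_blue[OF adm inv]) (auto simp: items_put)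
  next
    case (blue2 i)
    with type show ?thesis by (intro counters_inv_blue[OF adm inv]) (auto simp: items_snoc)
  next
    case (blue3 i n)
    with type show ?thesis by (intro counters_inv_blue[OF adm inv]) (auto simp: items_put)
  next
    case (blue4 i n j)
    with type show ?thesis by (intro counters_inv_blue[OF adm inv]) (auto simp: items_put)
  next
    case (blue5 i)
    with type show ?thesis by (intro counters_inv_blue[OF adm inv]) (auto simp: items_snoc)
  qed
qed

lemma sh_step_small_load:
  assumes "sh_step P (bs, s, e) x (bs', s', e')"
  shows "small_load bs' = small_load bs + (if sh_type P x = sh_k P + 1 then x else 0)"
  using assms
proof cases
  case (nf_fit n)
  then show ?thesis using small_load_next_fit_put[of n bs] by simp
qed (auto simp: small_load_put small_load_snoc)

lemma sh_step_arrivals: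
  assumes "sh_step P (bs, s, e) x (bs', s', e')" "i \<le> sh_k P"
  shows "s' i = s i + (if sh_type P x = i then 1 else 0)"
  using assms by cases auto

lemma fst_image_set_conv_nth: "l \<in> fst ` set xs \<longleftrightarrow> (\<exists>n<length xs. fst (xs ! n) = l)"
  by (metis in_set_conv_nth length_map list.set_map nth_map)

lemma full_if_no_room:
  fixes f :: "bin \<Rightarrow> nat"
  assumes "\<not> (\<exists>n<length bs. G (fst (bs ! n)) \<and> f (bs ! n) < g)"
  shows "\<forall>b\<in>set bs. G (fst b) \<longrightarrow> g \<le> f b"
  using assms by (metis in_set_conv_nth not_less)

lemma red_group_full_if_no_room:
  fixes f :: "bin \<Rightarrow> nat"
  assumes "\<not> (\<exists>n<length bs. fst (bs ! n) = RedOnly j \<and> f (bs ! n) < g)"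
    and "\<not> (\<exists>n<length bs. \<exists>i. fst (bs ! n) = Mixed i j \<and> f (bs ! n) < g)"
  shows "\<forall>b\<in>set bs. red_group j (fst b) \<longrightarrow> g \<le> f b"
  by (rule full_if_no_room) (use assms in \<open>auto simp: red_group_def\<close>)

lemma sh_step_bins_inv:
  assumes step: "sh_step P (bs, s, e) x (bs', s', e')" and adm: "sh_admissible P"
    and x: "0 < x" "x \<le> 1" and inv: "bins_inv P bs"
  shows "bins_inv P bs'"
proof -
  have type: "1 \<le> sh_type P x" "x \<le> sh_t P (sh_type P x)" using sh_type_spec[OF adm x] by auto
  have old_label: "label_ok P (fst (bs ! n))" if "n < length bs" for n
    using bins_invD(4)[OF inv] that by simp
  note merge = bins_invD(5)[OF inv]
  from step show ?thesis
  proof cases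
    case (nf_fit n)
    then show ?thesis using bins_inv_next_fit_put[OF inv _ _ x(1)] by simp
  next
    case nf_new
    then have "x \<le> sh_eps P" using type unfolding sh_eps_def by simp
    with nf_new show ?thesis using bins_inv_next_fit_snoc[OF inv x(1)] by simp
  next
    case (red1 i n)
    show ?thesis unfolding red1(1)
      by (rule bins_inv_put[OF inv _ x(1)]) (use red1 old_label[of n] in auto)
  next
    case (red2 i n j)
    show ?thesis unfolding red2(1)
      by (rule bins_inv_put[OF inv _ x(1)]) (use red2 old_label[of n] in auto)
  next
    case (red3 i n j)
    have "0 < sh_alpha P i" using red3 pos_if_less_nat_floor_mult by blast
    moreover note red_group_full_if_no_room[OF red3(7,8)]
    ultimately show ?thesis unfolding red3(1)
      by (intro bins_inv_put[OF inv _ x(1)])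
        (use red3 old_label[of n] type in \<open>auto simp: label_ok_def\<close>)
  next
    case (red4 i)
    have "0 < sh_alpha P i" using red4 pos_if_less_nat_floor_mult by blast
    moreover note red_group_full_if_no_room[OF red4(7,8)]
    moreover have "no_mergeable_pair P (insert (RedOnly i) (fst ` set bs))"
      using red4(9)
        by (intro no_mergeable_pair_insert_RedOnly[OF merge])
          (auto simp: fst_image_set_conv_nth not_le)
    ultimately show ?thesis unfolding red4(1)
      by (intro bins_inv_snoc[OF inv x(1)]) (use red4 type in \<open>auto simp: label_ok_def\<close>)
  next
    case (blue1 i n)
    show ?thesis unfolding blue1(1)
      by (rule bins_inv_put[OF inv _ x(1)]) (use blue1 old_label[of n] in auto)
  next
    case (blue2 i)
    have "\<forall>b\<in>set bs. fst b = Single i \<longrightarrow> sh_beta P i \<le> cnt P Blue i b"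
      using full_if_no_room[of bs "\<lambda>l. l = Single i"] blue2(8) by blast
    moreover have "no_mergeable_pair P (insert (Single i) (fst ` set bs))"
      by (rule no_mergeable_pair_insert[OF merge]) auto
    ultimately show ?thesis unfolding blue2(1)
      by (intro bins_inv_snoc[OF inv x(1)]) (use blue2 type in \<open>auto simp: label_ok_def\<close>)
  next
    case (blue3 i n)
    show ?thesis unfolding blue3(1)
      by (rule bins_inv_put[OF inv _ x(1)]) (use blue3 old_label[of n] in auto)
  next
    case (blue4 i n j)
    have "\<forall>b\<in>set bs. blue_group i (fst b) \<longrightarrow> sh_beta P i \<le> cnt P Blue i b"
      using full_if_no_room[of bs "blue_group i"] blue4(8) unfolding blue_group_def by blast
    then show ?thesis unfolding blue4(1)
      by (intro bins_inv_put[OF inv _ x(1)])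
        (use blue4 old_label[of n] type in \<open>auto simp: label_ok_def\<close>)
  next
    case (blue5 i)
    have "\<forall>b\<in>set bs. blue_group i (fst b) \<longrightarrow> sh_beta P i \<le> cnt P Blue i b"
      using full_if_no_room[of bs "blue_group i"] blue5(8) unfolding blue_group_def by blast
    moreover have "no_mergeable_pair P (insert (BlueOnly i) (fst ` set bs))"
      using blue5(9)
        by (intro no_mergeable_pair_insert_BlueOnly[OF merge])
          (auto simp: fst_image_set_conv_nth not_le)
    ultimately show ?thesis unfolding blue5(1)
      by (intro bins_inv_snoc[OF inv x(1)]) (use blue5 type in \<open>auto simp: label_ok_def\<close>)
  qed
qed

section \<open>Runs and weights\<close>

definition sh_inv :: "shparams \<Rightarrow> state \<Rightarrow> bool" where
  "sh_inv P st \<longleftrightarrow> (case st of (bs, s, e) \<Rightarrow> bins_inv P bs \<and> counters_inv P bs s e)"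

definition small_size :: "shparams \<Rightarrow> real list \<Rightarrow> real" where
  "small_size P L = sum_list (map (\<lambda>x. if sh_type P x = sh_k P + 1 then x else 0) L)"

definition type_count :: "shparams \<Rightarrow> nat \<Rightarrow> real list \<Rightarrow> nat" where
  "type_count P i L = length (filter (\<lambda>x. sh_type P x = i) L)"

lemma sh_inv_init: "sh_admissible P \<Longrightarrow> sh_inv P sh_init"
  by (simp add: sh_inv_def sh_init_def bins_inv_Nil counters_inv_def items_def)

lemma sh_exec_inv:
  assumes "sh_exec P st L st'" and adm: "sh_admissible P"
    and "\<forall>x\<in>set L. 0 < x \<and> x \<le> 1" and "sh_inv P st"
  shows "sh_inv P st' \<and> small_load (fst st') = small_load (fst st) + small_size P L \<and>
    (\<forall>i\<le>sh_k P. fst (snd st') i = fst (snd st) i + type_count P i L)"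
  using assms(1,3,4)
proof (induction rule: sh_exec.induct)
  case (exec_cons st x st' xs st'')
  obtain bs s e bs' s' e' where st: "st = (bs, s, e)" "st' = (bs', s', e')"
    by (cases st, cases st') auto
  have x: "0 < x" "x \<le> 1" using exec_cons.prems by auto
  have step: "sh_step P (bs, s, e) x (bs', s', e')" using exec_cons.hyps(1) st by simp
  have "sh_inv P st'"
    using exec_cons.prems(2) sh_step_bins_inv[OF step adm x] sh_step_counters_inv[OF step adm x]
    unfolding st sh_inv_def by simp
  with exec_cons.IH exec_cons.prems show ?case
    using sh_step_small_load[OF step] sh_step_arrivals[OF step]
    unfolding st by (simp add: small_size_def type_count_def)
qed (simp add: small_size_def type_count_def)

text \<open>Every \<open>W\<^sup>m\<close> is constant on the items of a type \<open>i \<le> k\<close>, and \<open>t\<^sub>i\<close> is such an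
  item.\<close>
definition sh_type_weight :: "shparams \<Rightarrow> nat \<Rightarrow> nat \<Rightarrow> real" where
  "sh_type_weight P m i = sh_W P m (sh_t P i)"

lemma sh_W_small: "sh_type P x = sh_k P + 1 \<Longrightarrow> sh_W P m x = x / (1 - sh_eps P)"
  by (simp add: sh_W_def)

lemma sh_W_eq_type_weight:
  assumes adm: "sh_admissible P" and x: "0 < x" "x \<le> 1" and small: "sh_type P x \<noteq> sh_k P + 1"
  shows "sh_W P m x = sh_type_weight P m (sh_type P x)"
proof -
  have type: "sh_type P (sh_t P (sh_type P x)) = sh_type P x"
    using sh_type_t[OF adm] sh_type_spec(1,2)[OF adm x] by simp
  show ?thesis
    unfolding sh_type_weight_def sh_W_def Let_def type if_not_P[OF small] by (rule refl)
qed

lemma sum_list_sh_W: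
  assumes adm: "sh_admissible P" and L: "\<forall>x\<in>set L. 0 < x \<and> x \<le> 1"
  shows "sum_list (map (sh_W P m) L) =
    small_size P L / (1 - sh_eps P) + (\<Sum>i\<in>{1..sh_k P}. type_count P i L * sh_type_weight P m i)"
  using L
proof (induction L)
  case (Cons x L)
  let ?t = "sh_type P x" and ?w = "sh_type_weight P m"
  have count: "real (type_count P i (x # L)) =
      real (type_count P i L) + (if ?t = i then 1 else 0)" for i
    by (simp add: type_count_def)
  have IH: "sum_list (map (sh_W P m) L) =
      small_size P L / (1 - sh_eps P) + (\<Sum>i\<in>{1..sh_k P}. type_count P i L * ?w i)"
    using Cons by simp
  show ?case
  proof (cases "?t = sh_k P + 1")
    case True
    then have "(\<Sum>i\<in>{1..sh_k P}. type_count P i (x # L) * ?w i) =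
        (\<Sum>i\<in>{1..sh_k P}. type_count P i L * ?w i)"
      by (intro sum.cong) (auto simp: count)
    then show ?thesis using IH True by (simp add: sh_W_small small_size_def add_divide_distrib)
  next
    case False
    moreover have "1 \<le> ?t" "?t \<le> sh_k P + 1" using sh_type_spec[OF adm, of x] Cons.prems by auto
    ultimately have "?t \<in> {1..sh_k P}" by simp
    then have "(\<Sum>i\<in>{1..sh_k P}. type_count P i (x # L) * ?w i)
        = (\<Sum>i\<in>{1..sh_k P}. type_count P i L * ?w i) + ?w ?t"
      by (simp add: count distrib_right sum.distrib if_distrib[of "\<lambda>y. y * _"] cong: if_cong)
    then show ?thesis
      using IH False sh_W_eq_type_weight[OF adm _ _ False] Cons.prems by (simp add: small_size_def)
  qed
qed (simp add: small_size_def type_count_def)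

section \<open>Counting bins\<close>

lemma sum_list_map_sum:
  "sum_list (map (\<lambda>b. \<Sum>i\<in>I. g i b) xs) = (\<Sum>i\<in>I. sum_list (map (g i) xs))"
  by (induction xs) (auto simp: sum.distrib)

fun bin_weight :: "(nat \<Rightarrow> real) \<Rightarrow> (nat \<Rightarrow> real) \<Rightarrow> label \<Rightarrow> real" where
  "bin_weight c d (Single i) = 1"
| "bin_weight c d (BlueOnly i) = c i"
| "bin_weight c d (RedOnly j) = d j"
| "bin_weight c d (Mixed i j) = c i + d j"
| "bin_weight c d Small = 1"

lemma bin_weight_eq_sum:
  assumes "label_ok P l"
  shows "bin_weight c d l = of_bool (l = Small) + (\<Sum>i\<in>{1..sh_k P}.
    of_bool (l = Single i) + c i * of_bool (blue_group i l) + d i * of_bool (red_group i l))"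
  using assms by (cases l) (simp_all add: label_ok_def sum.distrib)

lemma length_le_count_bins:
  assumes "\<forall>b\<in>set bs. label_ok P (fst b) \<and> 1 \<le> bin_weight c d (fst b)"
  shows "real (length bs) \<le> count_bins (\<lambda>l. l = Small) bs + (\<Sum>i\<in>{1..sh_k P}.
    count_bins (\<lambda>l. l = Single i) bs + c i * count_bins (blue_group i) bs
      + d i * count_bins (red_group i) bs)"
proof -
  have "real (length bs) = sum_list (map (\<lambda>b. 1) bs)" by (simp add: sum_list_triv)
  also have "\<dots> \<le> sum_list (map (\<lambda>b. bin_weight c d (fst b)) bs)"
    by (rule sum_list_mono) (use assms in auto)
  also have "\<dots> = sum_list (map (\<lambda>b. of_bool (fst b = Small) + (\<Sum>i\<in>{1..sh_k P}.
      of_bool (fst b = Single i) + c i * of_bool (blue_group i (fst b))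
        + d i * of_bool (red_group i (fst b)))) bs)"
    using assms by (intro arg_cong[where f = sum_list] map_cong) (auto simp: bin_weight_eq_sum)
  also have "\<dots> = count_bins (\<lambda>l. l = Small) bs + (\<Sum>i\<in>{1..sh_k P}.
      count_bins (\<lambda>l. l = Single i) bs + c i * count_bins (blue_group i) bs
      + d i * count_bins (red_group i) bs)"
    by (simp add: sum_list_addf sum_list_map_sum sum_list_const_mult count_bins_def)
  finally show ?thesis .
qed

lemma count_small_bins_le:
  assumes adm: "sh_admissible P" and inv: "bins_inv P bs"
  shows "count_bins (\<lambda>l. l = Small) bs \<le> small_load bs / (1 - sh_eps P) + 1"
proof -
  have "0 \<le> current_small_level bs"
    using bins_invD(4)[OF inv] last_in_set[of "small_bins bs"]
    by (auto simp: current_small_level_def small_bins_def)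
  then have "(real (length (small_bins bs)) - 1) * (1 - sh_eps P) \<le> small_load bs"
    using bins_invD(6)[OF inv] by simp
  then have "real (length (small_bins bs)) - 1 \<le> small_load bs / (1 - sh_eps P)"
    using sh_eps_bounds[OF adm] by (simp add: le_divide_eq)
  then show ?thesis by (simp add: count_bins_Small)
qed

lemma counters_inv_items_le:
  assumes adm: "sh_admissible P" and inv: "counters_inv P bs s e" and i: "i \<in> {1..sh_k P}"
  shows "items P Blue i bs \<le> (1 - sh_alpha P i) * s i + 1" "items P Red i bs \<le> sh_alpha P i * s i"
proof -
  have e: "items P Red i bs = e i" "items P Blue i bs + e i = s i" "e i = nat \<lfloor>sh_alpha P i * s i\<rfloor>"
    using bspec[OF inv[unfolded counters_inv_def] i] by blast+
  have "0 \<le> sh_alpha P i * s i" using adm i unfolding sh_admissible_def by simp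
  then have "real (e i) = of_int \<lfloor>sh_alpha P i * s i\<rfloor>" using e(3) by simp
  then have "sh_alpha P i * s i - 1 \<le> e i" "e i \<le> sh_alpha P i * s i" by linarith+
  then show "items P Blue i bs \<le> (1 - sh_alpha P i) * s i + 1" "items P Red i bs \<le> sh_alpha P i * s i"
    using e(1,2) by (simp_all add: algebra_simps)
qed

lemma count_blue_bins_le:
  assumes adm: "sh_admissible P" and bins: "bins_inv P bs" and counters: "counters_inv P bs s e"
    and i: "i \<in> {1..sh_k P}" and c: "0 \<le> c"
  shows "count_bins (\<lambda>l. l = Single i) bs + c * count_bins (blue_group i) bs
    \<le> (if sh_phi P i = 0 then 1 else c) * (2 + (1 - sh_alpha P i) * s i / sh_beta P i)"
proof -
  have beta: "1 \<le> real (sh_beta P i)" using sh_beta_ge_1[OF adm] i by simp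
  have "items P Blue i bs / sh_beta P i \<le> ((1 - sh_alpha P i) * s i + 1) / sh_beta P i"
    using counters_inv_items_le(1)[OF adm counters i] beta by (simp add: divide_right_mono)
  also have "\<dots> \<le> (1 - sh_alpha P i) * s i / sh_beta P i + 1"
    using beta by (simp add: add_divide_distrib)
  finally have items: "items P Blue i bs / sh_beta P i \<le> (1 - sh_alpha P i) * s i / sh_beta P i + 1" .
  have count: "count_bins G bs \<le> 2 + (1 - sh_alpha P i) * s i / sh_beta P i"
    if "deficit G (sh_beta P i) (\<lambda>b. real (cnt P Blue i b)) bs \<le> sh_beta P i" for G
  proof -
    have "count_bins G bs \<le> 1 + items P Blue i bs / sh_beta P i"
      using count_bins_le_if_deficit_le[OF that] beta unfolding items_def by simp
    with items show ?thesis by simp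
  qed
  have label: "label_ok P (fst b)" if "b \<in> set bs" for b using bins_invD(4)[OF bins] that by simp
  show ?thesis
  proof (cases "sh_phi P i = 0")
    case True
    have "\<not> blue_group i (fst b)" if "b \<in> set bs" for b
      using label[OF that] label_ok_blue_group True by blast
    then have "count_bins (blue_group i) bs = 0" by (simp add: count_bins_eq_0)
    then show ?thesis using count[OF bins_invD(1)[OF bins]] True by simp
  next
    case False
    have "fst b \<noteq> Single i" if "b \<in> set bs" for b
      using label[OF that] label_ok_Single False by auto
    then have "count_bins (\<lambda>l. l = Single i) bs = 0" by (simp add: count_bins_eq_0)
    then show ?thesis using count[OF bins_invD(2)[OF bins]] False c by (simp add: mult_left_mono)
  qed
qed

text \<open>This is where the hypothesis that \<open>\<gamma>\<^sub>i = 0\<close> forces \<open>\<alpha>\<^sub>i = 0\<close> is needed: for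
  \<open>\<gamma>\<^sub>i = 0\<close> the weights treat \<open>\<alpha>\<^sub>i / \<gamma>\<^sub>i\<close> as \<open>0\<close> (as does the division of HOL),
  so there must be no red bins of type \<open>i\<close>.\<close>
lemma count_red_bins_le:
  assumes adm: "sh_admissible P" and bins: "bins_inv P bs" and counters: "counters_inv P bs s e"
    and i: "i \<in> {1..sh_k P}" and red_gamma: "sh_gamma P i = 0 \<Longrightarrow> sh_alpha P i = 0"
  shows "count_bins (red_group i) bs \<le> 1 + sh_alpha P i * s i / sh_gamma P i"
proof (cases "sh_gamma P i = 0")
  case True
  then have "\<forall>b\<in>set bs. \<not> red_group i (fst b)"
    using red_gamma bins_invD(4)[OF bins] label_ok_red_group by fastforce
  then show ?thesis using count_bins_eq_0 True by simp
next
  case False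
  have "count_bins (red_group i) bs \<le> 1 + items P Red i bs / sh_gamma P i"
    using count_bins_le_if_deficit_le[OF bins_invD(3)[OF bins]] False unfolding items_def by simp
  also have "\<dots> \<le> 1 + sh_alpha P i * s i / sh_gamma P i"
    using counters_inv_items_le(2)[OF adm counters i] by (simp add: divide_right_mono)
  finally show ?thesis .
qed

section \<open>Choosing the weighting function\<close>

lemma length_le_weight_sum:
  assumes adm: "sh_admissible P" and red_gamma: "\<forall>i\<in>{1..sh_k P}. sh_gamma P i = 0 \<longrightarrow> sh_alpha P i = 0"
    and bins: "bins_inv P bs" and counters: "counters_inv P bs s e"
    and cd: "\<forall>i\<in>{1..sh_k P}. 0 \<le> c i \<and> c i \<le> 1 \<and> 0 \<le> d i \<and> d i \<le> 1"
    and cover: "\<forall>b\<in>set bs. 1 \<le> bin_weight c d (fst b)"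
    and weight: "\<forall>i\<in>{1..sh_k P}. (if sh_phi P i = 0 then 1 else c i) * (1 - sh_alpha P i) / sh_beta P i
      + d i * sh_alpha P i / sh_gamma P i \<le> sh_type_weight P m i"
  shows "real (length bs) \<le> small_load bs / (1 - sh_eps P)
    + (\<Sum>i\<in>{1..sh_k P}. s i * sh_type_weight P m i) + (1 + 3 * real (sh_k P))"
proof -
  have type_le: "count_bins (\<lambda>l. l = Single i) bs + c i * count_bins (blue_group i) bs
      + d i * count_bins (red_group i) bs \<le> s i * sh_type_weight P m i + 3"
    if i: "i \<in> {1..sh_k P}" for i
  proof -
    let ?y = "(1 - sh_alpha P i) * s i / sh_beta P i" and ?z = "sh_alpha P i * s i / sh_gamma P i"
    let ?c = "if sh_phi P i = 0 then 1 else c i"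
    have cdi: "0 \<le> c i" "c i \<le> 1" "0 \<le> d i" "d i \<le> 1" using cd i by auto
    have "count_bins (\<lambda>l. l = Single i) bs + c i * count_bins (blue_group i) bs \<le> ?c * (2 + ?y)"
      using count_blue_bins_le[OF adm bins counters i] cdi by simp
    moreover have "d i * count_bins (red_group i) bs \<le> d i * (1 + ?z)"
      using count_red_bins_le[OF adm bins counters i] red_gamma cdi i by (simp add: mult_left_mono)
    moreover have "?c * (2 + ?y) + d i * (1 + ?z) \<le> s i * (?c * (1 - sh_alpha P i) / sh_beta P i
        + d i * sh_alpha P i / sh_gamma P i) + 3"
      using cdi by (simp add: algebra_simps)
    moreover have "s i * (?c * (1 - sh_alpha P i) / sh_beta P i + d i * sh_alpha P i / sh_gamma P i)
        \<le> s i * sh_type_weight P m i"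
      using weight i by (simp add: mult_left_mono)
    ultimately show ?thesis by linarith
  qed
  have "real (length bs) \<le> count_bins (\<lambda>l. l = Small) bs + (\<Sum>i\<in>{1..sh_k P}.
      count_bins (\<lambda>l. l = Single i) bs + c i * count_bins (blue_group i) bs
      + d i * count_bins (red_group i) bs)"
    using bins_invD(4)[OF bins] cover by (intro length_le_count_bins) auto
  also have "\<dots> \<le> (small_load bs / (1 - sh_eps P) + 1)
      + (\<Sum>i\<in>{1..sh_k P}. s i * sh_type_weight P m i + 3)"
    by (rule add_mono[OF count_small_bins_le[OF adm bins] sum_mono[OF type_le]])
  finally show ?thesis by (simp add: sum.distrib)
qed

lemma type_weight_last_ge:
  assumes adm: "sh_admissible P" and i: "1 \<le> i" "i \<le> sh_k P"
  shows "(if sh_phi P i = 0 then 1 else 0) * (1 - sh_alpha P i) / sh_beta P i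
    + 1 * sh_alpha P i / sh_gamma P i \<le> sh_type_weight P (sh_K P + 1) i"
proof (cases "sh_K P = 0")
  case True
  then have "sh_gamma P i = 0" "sh_phi P i = 0"
    using adm sh_t_pos[OF adm, of i] i unfolding sh_admissible_def sh_gamma_eq_0_iff by auto
  then show ?thesis using True i by (simp add: sh_type_weight_def sh_W_def sh_type_t[OF adm])
next
  case False
  then show ?thesis using sh_varphi_eq_0_iff[OF adm i] i
    by (cases "sh_phi P i = 0"; cases "sh_gamma P i = 0")
      (simp_all add: sh_type_weight_def sh_W_def sh_type_t[OF adm] Let_def)
qed

text \<open>If \<open>l\<close> is the largest \<open>sh_phi P i\<close> over the open \<open>(i,?)\<close> bins, every open
  \<open>(?,j)\<close> bin has \<open>l < sh_varphi P j\<close>, for otherwise its red items would have gone into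
  such a bin. Hence these shares give every bin total weight at least \<open>1\<close>; they are the
  coefficients of \<open>W\<^sup>K\<^sup>+\<^sup>1\<^sup>-\<^sup>l\<close>.\<close>
definition blue_share :: "shparams \<Rightarrow> nat \<Rightarrow> nat \<Rightarrow> real" where
  "blue_share P l i = (if sh_phi P i \<le> l then 1 else 1 / 2)"

definition red_share :: "shparams \<Rightarrow> nat \<Rightarrow> nat \<Rightarrow> real" where
  "red_share P l j = (if l < sh_varphi P j then 1 / 2 else 0) + (if l < sh_K P then 1 / 2 else 0)"

lemma type_weight_share_ge:
  assumes adm: "sh_admissible P" and i: "1 \<le> i" "i \<le> sh_k P" and l: "1 \<le> l" "l \<le> sh_K P"
  shows "(if sh_phi P i = 0 then 1 else blue_share P l i) * (1 - sh_alpha P i) / sh_beta P i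
    + red_share P l i * sh_alpha P i / sh_gamma P i \<le> sh_type_weight P (sh_K P + 1 - l) i"
proof -
  have phi: "sh_phi P i \<le> sh_K P" using adm i unfolding sh_admissible_def by auto
  have varphi: "sh_varphi P i \<le> sh_K P" by (rule sh_varphi_le_K[OF adm i])
  define A where "A = (1 - sh_alpha P i) / sh_beta P i"
  define R where "R = sh_alpha P i / sh_gamma P i"
  have "0 \<le> A" "0 \<le> R" using adm i unfolding A_def R_def sh_admissible_def by auto
  show ?thesis
  proof (cases "l = sh_K P")
    case True
    then show ?thesis
      using phi varphi i
        by (simp add: sh_type_weight_def sh_W_def sh_type_t[OF adm] blue_share_def red_share_def)
  next
    case False
    then have m: "sh_K P + 1 - l \<noteq> 1" "sh_K P + 1 - l \<noteq> sh_K P + 1"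
      "sh_K P + 2 - (sh_K P + 1 - l) = l + 1"
      using l by auto
    have "sh_type_weight P (sh_K P + 1 - l) i
        = (if sh_phi P i \<le> l then A else A / 2) + (if l < sh_varphi P i then R else R / 2)"
      unfolding sh_type_weight_def sh_W_def Let_def A_def R_def using m i
        by (auto simp: sh_type_t[OF adm])
    then show ?thesis
      using False l \<open>0 \<le> A\<close> \<open>0 \<le> R\<close> unfolding blue_share_def red_share_def A_def [symmetric]
      by (auto simp: A_def R_def)
  qed
qed

lemma max_BlueOnly_level:
  assumes adm: "sh_admissible P" and red_gamma: "\<forall>i\<in>{1..sh_k P}. sh_gamma P i = 0 \<longrightarrow> sh_alpha P i = 0"
    and bins: "bins_inv P bs" and blue: "BlueOnly i0 \<in> fst ` set bs"
  obtains l where "1 \<le> l" "l \<le> sh_K P"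
    "\<And>i. BlueOnly i \<in> fst ` set bs \<Longrightarrow> sh_phi P i \<le> l"
    "\<And>j. RedOnly j \<in> fst ` set bs \<Longrightarrow> l < sh_varphi P j"
proof -
  have label: "label_ok P l" if "l \<in> fst ` set bs" for l using bins_invD(4)[OF bins] that by auto
  define S where "S = {i. BlueOnly i \<in> fst ` set bs}"
  have "i \<in> {1..sh_k P}" if "i \<in> S" for i
    using label[of "BlueOnly i"] that unfolding S_def label_ok_def by simp
  then have "finite (sh_phi P ` S)"
    by (meson finite_atLeastAtMost finite_imageI finite_subset subsetI)
  moreover have "S \<noteq> {}" using blue unfolding S_def by blast
  ultimately have max: "Max (sh_phi P ` S) \<in> sh_phi P ` S"
    "\<And>i. i \<in> S \<Longrightarrow> sh_phi P i \<le> Max (sh_phi P ` S)"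
    by auto
  then obtain i1 where i1: "i1 \<in> S" "sh_phi P i1 = Max (sh_phi P ` S)" by auto
  define l where "l = sh_phi P i1"
  have blue1: "BlueOnly i1 \<in> fst ` set bs" using i1(1) unfolding S_def by simp
  have "1 \<le> l" "l \<le> sh_K P"
    using label[OF blue1] adm unfolding l_def label_ok_def sh_admissible_def by auto
  show ?thesis
  proof (rule that)
    show "1 \<le> l" "l \<le> sh_K P" by fact+
    show "sh_phi P i \<le> l" if "BlueOnly i \<in> fst ` set bs" for i
      using max(2)[of i] that i1(2) unfolding S_def l_def by simp
    show "l < sh_varphi P j" if red: "RedOnly j \<in> fst ` set bs" for j
    proof (rule ccontr)
      assume "\<not> l < sh_varphi P j"
      have j: "1 \<le> j" "j \<le> sh_k P" "0 < sh_alpha P j" using label[OF red]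
        by (auto simp: label_ok_def)
      then have "0 < sh_gamma P j" using red_gamma by auto
      then have "real (sh_gamma P j) * sh_t P j \<le> sh_Delta P l"
        using sh_gamma_t_le_Delta[OF adm j(1,2)] \<open>\<not> l < sh_varphi P j\<close> \<open>l \<le> sh_K P\<close> by simp
      moreover have "sh_Delta P l < real (sh_gamma P j) * sh_t P j"
        using bins_invD(5)[OF bins] blue1 red unfolding no_mergeable_pair_def l_def by blast
      ultimately show False by simp
    qed
  qed
qed

lemma length_le_weight_last:
  assumes adm: "sh_admissible P" and red_gamma: "\<forall>i\<in>{1..sh_k P}. sh_gamma P i = 0 \<longrightarrow> sh_alpha P i = 0"
    and bins: "bins_inv P bs" and counters: "counters_inv P bs s e"
    and no_BlueOnly: "\<And>i. BlueOnly i \<notin> fst ` set bs"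
  shows "real (length bs) \<le> small_load bs / (1 - sh_eps P)
    + (\<Sum>i\<in>{1..sh_k P}. s i * sh_type_weight P (sh_K P + 1) i) + (1 + 3 * real (sh_k P))"
proof (rule length_le_weight_sum[OF adm red_gamma bins counters])
  show "\<forall>b\<in>set bs. 1 \<le> bin_weight (\<lambda>_. 0) (\<lambda>_. 1) (fst b)"
  proof
    fix b assume "b \<in> set bs"
    then have "fst b \<in> fst ` set bs" by simp
    then show "1 \<le> bin_weight (\<lambda>_. 0) (\<lambda>_. 1) (fst b)"
      using no_BlueOnly by (cases "fst b") auto
  qed
  show "\<forall>i\<in>{1..sh_k P}. (if sh_phi P i = 0 then 1 else 0) * (1 - sh_alpha P i) / sh_beta P i
      + 1 * sh_alpha P i / sh_gamma P i \<le> sh_type_weight P (sh_K P + 1) i"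
    using type_weight_last_ge[OF adm] by auto
qed simp

lemma length_le_weight_level:
  assumes adm: "sh_admissible P" and red_gamma: "\<forall>i\<in>{1..sh_k P}. sh_gamma P i = 0 \<longrightarrow> sh_alpha P i = 0"
    and bins: "bins_inv P bs" and counters: "counters_inv P bs s e"
    and l: "1 \<le> l" "l \<le> sh_K P"
    and blue: "\<And>i. BlueOnly i \<in> fst ` set bs \<Longrightarrow> sh_phi P i \<le> l"
    and red: "\<And>j. RedOnly j \<in> fst ` set bs \<Longrightarrow> l < sh_varphi P j"
  shows "real (length bs) \<le> small_load bs / (1 - sh_eps P)
    + (\<Sum>i\<in>{1..sh_k P}. s i * sh_type_weight P (sh_K P + 1 - l) i) + (1 + 3 * real (sh_k P))"
proof (rule length_le_weight_sum[OF adm red_gamma bins counters])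
  show "\<forall>b\<in>set bs. 1 \<le> bin_weight (blue_share P l) (red_share P l) (fst b)"
  proof
    fix b assume "b \<in> set bs"
    then have b: "fst b \<in> fst ` set bs" and ok: "label_ok P (fst b)"
      using bins_invD(4)[OF bins] by auto
    show "1 \<le> bin_weight (blue_share P l) (red_share P l) (fst b)"
    proof (cases "fst b")
      case (BlueOnly i)
      then show ?thesis using blue b by (simp add: blue_share_def)
    next
      case (RedOnly j)
      then have "l < sh_varphi P j" "sh_varphi P j \<le> sh_K P"
        using red b ok sh_varphi_le_K[OF adm] by (auto simp: label_ok_def)
      then show ?thesis using RedOnly by (simp add: red_share_def)
    next
      case (Mixed i j)
      then have "sh_phi P i \<le> sh_K P" using ok adm by (auto simp: label_ok_def sh_admissible_def)
      then show ?thesis using Mixed by (simp add: blue_share_def red_share_def)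
    qed simp_all
  qed
  show "\<forall>i\<in>{1..sh_k P}. (if sh_phi P i = 0 then 1 else blue_share P l i) * (1 - sh_alpha P i)
      / sh_beta P i + red_share P l i * sh_alpha P i / sh_gamma P i
      \<le> sh_type_weight P (sh_K P + 1 - l) i"
    using type_weight_share_ge[OF adm _ _ l] by auto
qed (simp add: blue_share_def red_share_def)

lemma sh_bins_le_weight:
  assumes adm: "sh_admissible P" and red_gamma: "\<forall>i\<in>{1..sh_k P}. sh_gamma P i = 0 \<longrightarrow> sh_alpha P i = 0"
    and bins: "bins_inv P bs" and counters: "counters_inv P bs s e"
  shows "\<exists>m\<in>{1..sh_K P + 1}. real (length bs) \<le> small_load bs / (1 - sh_eps P)
    + (\<Sum>i\<in>{1..sh_k P}. s i * sh_type_weight P m i) + (1 + 3 * real (sh_k P))"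
proof (cases "\<exists>i. BlueOnly i \<in> fst ` set bs")
  case False
  then show ?thesis
    using length_le_weight_last[OF adm red_gamma bins counters]
      by (intro bexI[of _ "sh_K P + 1"]) auto
next
  case True
  then obtain l where l: "1 \<le> l" "l \<le> sh_K P"
    and "\<And>i. BlueOnly i \<in> fst ` set bs \<Longrightarrow> sh_phi P i \<le> l"
    and "\<And>j. RedOnly j \<in> fst ` set bs \<Longrightarrow> l < sh_varphi P j"
    using max_BlueOnly_level[OF adm red_gamma bins] by blast
  with length_le_weight_level[OF adm red_gamma bins counters] show ?thesis
    by (intro bexI[of _ "sh_K P + 1 - l"]) auto
qed

theorem theorem1:
  fixes P :: shparams
  assumes adm: "sh_admissible P"
    and red_only_if_gamma: "\<forall>i\<in>{1..sh_k P}. sh_gamma P i = 0 \<longrightarrow> sh_alpha P i = 0"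
  shows "\<exists>C::real. \<forall>L st.
           (\<forall>x\<in>set L. 0 < x \<and> x \<le> 1) \<longrightarrow> sh_exec P sh_init L st \<longrightarrow>
           real (nbins st) \<le> Max ((\<lambda>m. sum_list (map (sh_W P m) L)) ` {1..sh_K P + 1}) + C"
proof (intro exI allI impI)
  fix L st
  assume L: "\<forall>x\<in>set L. 0 < x \<and> x \<le> 1" and exec: "sh_exec P sh_init L st"
  obtain bs s e where st: "st = (bs, s, e)" by (cases st)
  have bins: "bins_inv P bs" and counters: "counters_inv P bs s e"
    and load: "small_load bs = small_size P L" and arrivals: "\<forall>i\<le>sh_k P. s i = type_count P i L"
    using sh_exec_inv[OF exec adm L sh_inv_init[OF adm]]
    unfolding st by (auto simp: sh_inv_def sh_init_def small_load_def small_bins_def)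
  obtain m where m: "m \<in> {1..sh_K P + 1}" and bound: "real (length bs) \<le> small_load bs / (1 - sh_eps P)
      + (\<Sum>i\<in>{1..sh_k P}. s i * sh_type_weight P m i) + (1 + 3 * real (sh_k P))"
    using sh_bins_le_weight[OF adm red_only_if_gamma bins counters] by blast
  have "(\<Sum>i\<in>{1..sh_k P}. s i * sh_type_weight P m i) =
      (\<Sum>i\<in>{1..sh_k P}. type_count P i L * sh_type_weight P m i)"
    using arrivals by (intro sum.cong) auto
  then have "real (length bs) \<le> sum_list (map (sh_W P m) L) + (1 + 3 * real (sh_k P))"
    using bound load sum_list_sh_W[OF adm L] by simp
  also have "sum_list (map (sh_W P m) L) \<le> Max ((\<lambda>m. sum_list (map (sh_W P m) L)) ` {1..sh_K P + 1})"
    using m by (intro Max_ge) auto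
  finally show "real (nbins st) \<le> Max ((\<lambda>m. sum_list (map (sh_W P m) L)) ` {1..sh_K P + 1})
      + (1 + 3 * real (sh_k P))"
    unfolding st nbins_def by simp
qed

end
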